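(* Let $E$ be an arbitrary graph satisfying Condition (L), $X\subseteq{\rm Reg}(E)$ and $Y={\rm Reg}(E)\setminus X$. Let $A$ be a ring and $\pi:C_K^X(E)\to A$ a ring homomorphism such that $\pi(u)\ne0$ for every $u\in E^0$ and $\pi\big(v-\sum_{e\in s^{-1}(v)}ee^*\big)\ne 0$ for every $v\in Y$. Then $\pi$ is injective.
   Context: Let $K$ be a field and $E=(E^0,E^1,r,s)$ a directed graph (no countability or finiteness assumptions). A vertex $v$ is regular if $s^{-1}(v)$ is finite and nonempty; ${\rm Reg}(E)$ is the set of regular vertices. For $X\subseteq{\rm Reg}(E)$, the relative Cohn path algebra $C_K^X(E)$ is the free $K$-algebra generated by $E^0\cup E^1\cup\{e^*:e\in E^1\}$ subject to: $vw=\delta_{v,w}v$; $s(e)e=er(e)=e$ and $r(e)e^*=e^*s(e)=e^*$; $e^*f=\delta_{e,f}r(e)$; $v=\sum_{e\in s^{-1}(v)}ee^*$ for every $v\in X$. A cycle is a path $e_1\cdots e_n$ ($n\ge1$) with $r(e_n)=s(e_1)$ and $s(e_i)\ne s(e_j)$ for $i\ne j$. An exit of $e_1\cdots e_n$ is an edge $e$ with $s(e)=s(e_i)$ for some $i$ and $e\ne e_i$. $E$ satisfies Condition (L) if every cycle in $E$ has an exit. *)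

theory Defs
  imports Main
begin

definition graph :: "'v set \<Rightarrow> 'e set \<Rightarrow> ('e \<Rightarrow> 'v) \<Rightarrow> ('e \<Rightarrow> 'v) \<Rightarrow> bool" where
  "graph E0 E1 r s \<longleftrightarrow> r ` E1 \<subseteq> E0 \<and> s ` E1 \<subseteq> E0"

definition regular_vertex :: "'e set \<Rightarrow> ('e \<Rightarrow> 'v) \<Rightarrow> 'v \<Rightarrow> bool" where
  "regular_vertex E1 s v \<longleftrightarrow> finite {e \<in> E1. s e = v} \<and> {e \<in> E1. s e = v} \<noteq> {}"

definition Reg :: "'v set \<Rightarrow> 'e set \<Rightarrow> ('e \<Rightarrow> 'v) \<Rightarrow> 'v set" where
  "Reg E0 E1 s = {v \<in> E0. regular_vertex E1 s v}"

definition is_cycle :: "'e set \<Rightarrow> ('e \<Rightarrow> 'v) \<Rightarrow> ('e \<Rightarrow> 'v) \<Rightarrow> 'e list \<Rightarrow> bool" where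
  "is_cycle E1 r s p \<longleftrightarrow> p \<noteq> [] \<and> set p \<subseteq> E1
     \<and> (\<forall>i. Suc i < length p \<longrightarrow> r (p ! i) = s (p ! Suc i))
     \<and> r (last p) = s (hd p)
     \<and> distinct (map s p)"

definition is_exit :: "'e set \<Rightarrow> ('e \<Rightarrow> 'v) \<Rightarrow> 'e list \<Rightarrow> 'e \<Rightarrow> bool" where
  "is_exit E1 s p e \<longleftrightarrow> e \<in> E1 \<and> (\<exists>i < length p. s e = s (p ! i) \<and> e \<noteq> p ! i)"

definition condition_L :: "'e set \<Rightarrow> ('e \<Rightarrow> 'v) \<Rightarrow> ('e \<Rightarrow> 'v) \<Rightarrow> bool" where
  "condition_L E1 r s \<longleftrightarrow> (\<forall>p. is_cycle E1 r s p \<longrightarrow> (\<exists>e. is_exit E1 s p e))"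

section \<open>The free (non-unital) K-algebra on E0 \<union> E1 \<union> E1*\<close>

datatype ('v, 'e) gen = Vx 'v | Ed 'e | Gh 'e

definition gens :: "'v set \<Rightarrow> 'e set \<Rightarrow> ('v, 'e) gen set" where
  "gens E0 E1 = Vx ` E0 \<union> Ed ` E1 \<union> Gh ` E1"

definition FA :: "'v set \<Rightarrow> 'e set \<Rightarrow> (('v, 'e) gen list \<Rightarrow> 'k::field) set" where
  "FA E0 E1 = {f. finite {w. f w \<noteq> 0}
                  \<and> (\<forall>w. f w \<noteq> 0 \<longrightarrow> w \<noteq> [] \<and> set w \<subseteq> gens E0 E1)}"

definition fadd :: "('g list \<Rightarrow> 'k::field) \<Rightarrow> ('g list \<Rightarrow> 'k) \<Rightarrow> 'g list \<Rightarrow> 'k" where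
  "fadd f g = (\<lambda>w. f w + g w)"

definition fminus :: "('g list \<Rightarrow> 'k::field) \<Rightarrow> ('g list \<Rightarrow> 'k) \<Rightarrow> 'g list \<Rightarrow> 'k" where
  "fminus f g = (\<lambda>w. f w - g w)"

definition fsmul :: "'k::field \<Rightarrow> ('g list \<Rightarrow> 'k) \<Rightarrow> 'g list \<Rightarrow> 'k" where
  "fsmul c f = (\<lambda>w. c * f w)"

definition fzero :: "'g list \<Rightarrow> 'k::field" where
  "fzero = (\<lambda>w. 0)"

text \<open>Concatenation product (words are nonempty, so splits are into two nonempty parts).\<close>
definition fmul :: "('g list \<Rightarrow> 'k::field) \<Rightarrow> ('g list \<Rightarrow> 'k) \<Rightarrow> 'g list \<Rightarrow> 'k" where
  "fmul f g = (\<lambda>w. \<Sum>i\<in>{1..<length w}. f (take i w) * g (drop i w))"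

definition fgen :: "'g \<Rightarrow> 'g list \<Rightarrow> 'k::field" where
  "fgen x = (\<lambda>w. if w = [x] then 1 else 0)"

definition gap_elem :: "'e set \<Rightarrow> ('e \<Rightarrow> 'v) \<Rightarrow> 'v \<Rightarrow> ('v, 'e) gen list \<Rightarrow> 'k::field" where
  "gap_elem E1 s v = fminus (fgen (Vx v))
      (\<lambda>w. \<Sum>e\<in>{e \<in> E1. s e = v}. fmul (fgen (Ed e)) (fgen (Gh e)) w)"

definition cohn_rels :: "'v set \<Rightarrow> 'e set \<Rightarrow> ('e \<Rightarrow> 'v) \<Rightarrow> ('e \<Rightarrow> 'v) \<Rightarrow> 'v set
     \<Rightarrow> (('v, 'e) gen list \<Rightarrow> 'k::field) set" where
  "cohn_rels E0 E1 r s X =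
     {fminus (fmul (fgen (Vx v)) (fgen (Vx w))) (if v = w then fgen (Vx v) else fzero)
        | v w. v \<in> E0 \<and> w \<in> E0}
   \<union> {fminus (fmul (fgen (Vx (s e))) (fgen (Ed e))) (fgen (Ed e)) | e. e \<in> E1}
   \<union> {fminus (fmul (fgen (Ed e)) (fgen (Vx (r e)))) (fgen (Ed e)) | e. e \<in> E1}
   \<union> {fminus (fmul (fgen (Vx (r e))) (fgen (Gh e))) (fgen (Gh e)) | e. e \<in> E1}
   \<union> {fminus (fmul (fgen (Gh e)) (fgen (Vx (s e)))) (fgen (Gh e)) | e. e \<in> E1}
   \<union> {fminus (fmul (fgen (Gh e)) (fgen (Ed f))) (if e = f then fgen (Vx (r e)) else fzero)
        | e f. e \<in> E1 \<and> f \<in> E1}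
   \<union> {gap_elem E1 s v | v. v \<in> X}"

inductive_set cohn_ideal :: "'v set \<Rightarrow> 'e set \<Rightarrow> ('e \<Rightarrow> 'v) \<Rightarrow> ('e \<Rightarrow> 'v) \<Rightarrow> 'v set
     \<Rightarrow> (('v, 'e) gen list \<Rightarrow> 'k::field) set"
  for E0 E1 r s X where
  rel: "a \<in> cohn_rels E0 E1 r s X \<Longrightarrow> a \<in> cohn_ideal E0 E1 r s X"
| zero: "fzero \<in> cohn_ideal E0 E1 r s X"
| add: "a \<in> cohn_ideal E0 E1 r s X \<Longrightarrow> b \<in> cohn_ideal E0 E1 r s X
          \<Longrightarrow> fadd a b \<in> cohn_ideal E0 E1 r s X"
| smul: "a \<in> cohn_ideal E0 E1 r s X \<Longrightarrow> fsmul c a \<in> cohn_ideal E0 E1 r s X"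
| lmul: "a \<in> cohn_ideal E0 E1 r s X \<Longrightarrow> x \<in> FA E0 E1 \<Longrightarrow> fmul x a \<in> cohn_ideal E0 E1 r s X"
| rmul: "a \<in> cohn_ideal E0 E1 r s X \<Longrightarrow> x \<in> FA E0 E1 \<Longrightarrow> fmul a x \<in> cohn_ideal E0 E1 r s X"

definition cls :: "'v set \<Rightarrow> 'e set \<Rightarrow> ('e \<Rightarrow> 'v) \<Rightarrow> ('e \<Rightarrow> 'v) \<Rightarrow> 'v set
     \<Rightarrow> (('v, 'e) gen list \<Rightarrow> 'k::field) \<Rightarrow> (('v, 'e) gen list \<Rightarrow> 'k) set" where
  "cls E0 E1 r s X x = {y \<in> FA E0 E1. fminus y x \<in> cohn_ideal E0 E1 r s X}"

definition CohnAlg :: "'v set \<Rightarrow> 'e set \<Rightarrow> ('e \<Rightarrow> 'v) \<Rightarrow> ('e \<Rightarrow> 'v) \<Rightarrow> 'v set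
     \<Rightarrow> (('v, 'e) gen list \<Rightarrow> 'k::field) set set" where
  "CohnAlg E0 E1 r s X = cls E0 E1 r s X ` FA E0 E1"

definition cohn_ring_hom :: "'v set \<Rightarrow> 'e set \<Rightarrow> ('e \<Rightarrow> 'v) \<Rightarrow> ('e \<Rightarrow> 'v) \<Rightarrow> 'v set
     \<Rightarrow> ((('v, 'e) gen list \<Rightarrow> 'k::field) set \<Rightarrow> 'a::ring) \<Rightarrow> bool" where
  "cohn_ring_hom E0 E1 r s X \<pi> \<longleftrightarrow>
     (\<forall>x \<in> FA E0 E1. \<forall>y \<in> FA E0 E1.
        \<pi> (cls E0 E1 r s X (fadd x y)) = \<pi> (cls E0 E1 r s X x) + \<pi> (cls E0 E1 r s X y)
      \<and> \<pi> (cls E0 E1 r s X (fmul x y)) = \<pi> (cls E0 E1 r s X x) * \<pi> (cls E0 E1 r s X y))"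

end

theory Submission
  imports Defs
begin

text \<open>
  Modulo the relations every element is a finite combination of monomials \<open>\<mu>\<nu>\<^sup>*\<close> with
  \<open>r(\<mu>) = r(\<nu>)\<close>. Suppose \<open>\<pi>\<close> kills such a combination \<open>x\<close>. Cutting \<open>x\<close> down by vertices on both
  sides, all \<open>\<mu>\<close> start at \<open>u\<close> and all \<open>\<nu>\<close> at \<open>w\<close>, and we induct on the maximal length of the
  \<open>\<nu>\<close>. Multiplying on the right by an edge \<open>e\<close> out of \<open>w\<close> shortens the \<open>\<nu>\<close>, so \<open>xe = 0\<close>
  by induction. For regular \<open>w\<close> this gives \<open>x = x\<^sub>0 q\<^sub>w\<close>, where \<open>x\<^sub>0\<close> is the part of \<open>x\<close>
  without ghost edges and \<open>q\<^sub>w = w - \<Sum>ee\<^sup>*\<close>, which vanishes for \<open>w \<in> X\<close>; for an infinite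
  emitter, multiplying by an edge out of \<open>w\<close> not occurring in \<open>x\<close> reduces to \<open>x\<^sub>0\<close>.

  It remains to see that \<open>\<pi>(\<Sum> c\<^sub>\<mu> \<mu>) = 0\<close> (or \<open>\<pi>(\<Sum> c\<^sub>\<mu> \<mu> q\<^sub>w) = 0\<close>) forces all
  \<open>c\<^sub>\<mu> = 0\<close>. Multiplying by \<open>\<mu>\<^sub>1\<^sup>*\<close> for a shortest \<open>\<mu>\<^sub>1\<close> with \<open>c\<^sub>\<mu>\<^sub>1 \<noteq> 0\<close> leaves
  \<open>c\<^sub>\<mu>\<^sub>1 w\<close> plus a combination of closed paths at \<open>w\<close>. Condition (L) yields a path \<open>\<lambda>\<close>,
  winding around a cycle at \<open>w\<close> and leaving it through an exit, with \<open>\<lambda>\<^sup>*\<tau>\<lambda> = 0\<close> for all these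
  closed paths \<open>\<tau>\<close>; sandwiching between \<open>\<lambda>\<^sup>*\<close> and \<open>\<lambda>\<close> (respectively between \<open>q\<^sub>w\<close> and
  \<open>q\<^sub>w\<close>) isolates \<open>c\<^sub>\<mu>\<^sub>1 r(\<lambda>)\<close> (respectively \<open>c\<^sub>\<mu>\<^sub>1 q\<^sub>w\<close>), whose image is not zero.
\<close>

lemma take_prefix_append_drop: "take (length a) x = a \<Longrightarrow> a @ drop (length a) x = x"
  by (metis append_take_drop_id)

lemma take_append_prefix:
  assumes "take (length xs) (ys @ xs) = xs" "length ys \<le> length xs"
  shows "take (length ys) xs = ys"
proof -
  have "take (length ys) xs = take (length ys) (take (length xs) (ys @ xs))" using assms(1) by simp
  also have "\<dots> = ys" using assms(2) by (simp add: min_def)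
  finally show ?thesis .
qed

lemma take_append_shift:
  assumes "take (length xs) (ys @ xs) = xs" "length ys \<le> i" "i < length xs"
  shows "xs ! i = xs ! (i - length ys)"
proof -
  have "xs ! i = take (length xs) (ys @ xs) ! i" using assms(1) by simp
  also have "\<dots> = xs ! (i - length ys)" using assms(2,3) by (simp add: nth_append)
  finally show ?thesis .
qed

lemma nth_concat_replicate:
  assumes "j \<le> length c" "p < M * length c + j"
  shows "(concat (replicate M c) @ take j c) ! p = c ! (p mod length c)"
  using assms
proof (induction M arbitrary: p)
  case 0 thus ?case by (simp add: nth_append)
next
  case (Suc M)
  show ?case
  proof (cases "p < length c")
    case True thus ?thesis by (simp add: nth_append)
  next
    case False
    hence "p - length c < M * length c + j" using Suc.prems by simp
    from Suc.IH[OF Suc.prems(1) this] False show ?thesis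
      by (simp add: nth_append le_mod_geq)
  qed
qed

type_synonym ('v,'e,'k) el = "('v,'e) gen list \<Rightarrow> 'k"

definition fword :: "'g list \<Rightarrow> 'g list \<Rightarrow> 'k::field" where
  "fword u = (\<lambda>w. if w = u then 1 else 0)"

lemma fgen_eq_fword: "fgen x = fword [x]" by (simp add: fgen_def fword_def)

lemma fmul_fword:
  assumes "u \<noteq> []" "v \<noteq> []"
  shows "fmul (fword u) (fword v) = (fword (u@v) :: 'g list \<Rightarrow> 'k::field)"
proof (rule ext)
  fix z :: "'g list"
  have "fmul (fword u) (fword v) z = (\<Sum>i\<in>{1..<length z}. (if i = length u \<and> z = u@v then 1 else 0::'k))"
    unfolding fmul_def fword_def by (rule sum.cong) (auto simp: append_eq_conv_conj)
  also have "\<dots> = fword (u@v) z"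
    using assms by (auto simp: fword_def Suc_le_eq)
  finally show "fmul (fword u) (fword v) z = (fword (u@v) z :: 'k)" .
qed

lemma fmul_assoc: "fmul (fmul f g) h = fmul f (fmul g h)"
proof (rule ext)
  fix w :: "'a list"
  define n where "n = length w"
  define F where "F i j = f (take j w) * g (take (i - j) (drop j w)) * h (drop i w)" for i j
  have "fmul (fmul f g) h w = (\<Sum>i\<in>{1..<n}. \<Sum>j\<in>{1..<i}. F i j)"
    unfolding fmul_def n_def F_def
    by (rule sum.cong) (auto simp: sum_distrib_right min_def take_drop intro!: sum.cong)
  also have "\<dots> = (\<Sum>(i, j)\<in>(SIGMA i:{1..<n}. {1..<i}). F i j)"
    by (rule sum.Sigma) auto
  also have "\<dots> = (\<Sum>(j, i)\<in>(SIGMA j:{1..<n}. {j<..<n}). F i j)"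
    by (rule sum.reindex_bij_witness[where i=prod.swap and j=prod.swap]) auto
  also have "\<dots> = (\<Sum>j\<in>{1..<n}. \<Sum>i\<in>{j<..<n}. F i j)"
    by (rule sum.Sigma[symmetric]) auto
  also have "\<dots> = fmul f (fmul g h) w"
    unfolding fmul_def n_def
  proof (rule sum.cong)
    fix j assume "j \<in> {1..<length w}"
    have "(\<Sum>i\<in>{j<..<length w}. F i j) = (\<Sum>k\<in>{1..<length w - j}. F (k + j) j)"
      by (rule sum.reindex_bij_witness[where i="\<lambda>k. k + j" and j="\<lambda>i. i - j"]) auto
    also have "\<dots> = f (take j w) * (\<Sum>k\<in>{1..<length (drop j w)}. g (take k (drop j w)) * h (drop k (drop j w)))"
      unfolding F_def by (simp add: sum_distrib_left mult.assoc add.commute)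
    finally show "(\<Sum>i\<in>{j<..<length w}. F i j)
        = f (take j w) * (\<Sum>k\<in>{1..<length (drop j w)}. g (take k (drop j w)) * h (drop k (drop j w)))" .
  qed simp
  finally show "fmul (fmul f g) h w = fmul f (fmul g h) w" .
qed

definition fsum :: "'i set \<Rightarrow> ('i \<Rightarrow> 'g list \<Rightarrow> 'k::field) \<Rightarrow> 'g list \<Rightarrow> 'k" where
  "fsum A f = (\<lambda>w. \<Sum>i\<in>A. f i w)"

lemmas fdefs = fadd_def fminus_def fsmul_def fzero_def fsum_def

lemma fmul_fadd_left: "fmul (fadd a b) c = fadd (fmul a c) (fmul b c)"
  by (simp add: fmul_def fdefs sum.distrib algebra_simps)

lemma fmul_fminus_left: "fmul (fminus a b) c = fminus (fmul a c) (fmul b c)"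
  by (simp add: fmul_def fdefs sum_subtractf algebra_simps)

lemma fmul_fminus_right: "fmul c (fminus a b) = fminus (fmul c a) (fmul c b)"
  by (simp add: fmul_def fdefs sum_subtractf algebra_simps)

lemma fmul_fsmul_left: "fmul (fsmul k a) c = fsmul k (fmul a c)"
  by (simp add: fmul_def fdefs sum_distrib_left algebra_simps)

lemma fmul_fsmul_right: "fmul c (fsmul k a) = fsmul k (fmul c a)"
  by (simp add: fmul_def fdefs sum_distrib_left algebra_simps)

lemma fmul_fzero_left: "fmul fzero c = fzero"
  by (simp add: fmul_def fdefs)

lemma fmul_fzero_right: "fmul c fzero = fzero"
  by (simp add: fmul_def fdefs)

lemma fmul_fsum_left: "fmul (fsum A f) c = fsum A (\<lambda>i. fmul (f i) c)"
  by (simp add: fmul_def fdefs sum_distrib_right sum.swap[of _ A])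

lemma fmul_fsum_right: "fmul c (fsum A f) = fsum A (\<lambda>i. fmul c (f i))"
  by (simp add: fmul_def fdefs sum_distrib_left sum.swap[of _ A])

lemma fsum_empty[simp]: "fsum {} f = fzero" by (simp add: fdefs)

lemma fsum_insert: "finite A \<Longrightarrow> i \<notin> A \<Longrightarrow> fsum (insert i A) f = fadd (f i) (fsum A f)"
  by (simp add: fdefs)

lemma fsum_cong: "(\<And>i. i \<in> A \<Longrightarrow> f i = g i) \<Longrightarrow> fsum A f = fsum A g"
  by (simp add: fdefs)

lemma fsum_delta:
  "finite A \<Longrightarrow> i \<in> A \<Longrightarrow> fsum A (\<lambda>j. if j = i then f else fzero) = f"
  by (rule ext) (simp add: fsum_def fzero_def if_distrib[of "\<lambda>h. h _"] sum.delta' cong: if_cong)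

lemma fsum_filter_if:
  "finite A \<Longrightarrow> fsum A (\<lambda>i. if Q i then f i else fzero) = fsum {i\<in>A. Q i} f"
  unfolding fsum_def fzero_def
  by (rule ext) (simp add: sum.inter_filter[symmetric] if_distrib[of "\<lambda>h. h _"] cong: if_cong)

lemma fsum_smul_regroup:
  assumes "finite D"
  shows "fsum D (\<lambda>i. fsmul (c i) (F (g i)))
       = fsum (g ` D) (\<lambda>j. fsmul (\<Sum>i\<in>{i\<in>D. g i = j}. c i) (F j))"
proof (rule ext)
  fix x
  have "(\<Sum>i\<in>D. c i * F (g i) x) = (\<Sum>j\<in>g ` D. \<Sum>i\<in>{i\<in>D. g i = j}. c i * F (g i) x)"
    by (rule sum.image_gen[OF assms])
  also have "\<dots> = (\<Sum>j\<in>g ` D. (\<Sum>i\<in>{i\<in>D. g i = j}. c i) * F j x)"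
    by (rule sum.cong) (auto simp: sum_distrib_right)
  finally show "fsum D (\<lambda>i. fsmul (c i) (F (g i))) x
      = fsum (g ` D) (\<lambda>j. fsmul (\<Sum>i\<in>{i\<in>D. g i = j}. c i) (F j)) x"
    by (simp add: fsum_def fsmul_def)
qed

lemma fsum_smul_nonzero_coeffs:
  "finite S \<Longrightarrow> fsum S (\<lambda>i. fsmul (c i) (F i)) = fsum {i\<in>S. c i \<noteq> 0} (\<lambda>i. fsmul (c i) (F i))"
  unfolding fsum_def fsmul_def by (intro ext sum.mono_neutral_right) auto

lemma fadd_fzero: "fadd a fzero = a" by (simp add: fdefs)

lemma fminus_self: "fminus a a = fzero" by (simp add: fdefs)

lemma fminus_fzero: "fminus a fzero = a" by (simp add: fdefs)

lemma fminus_eq: "fminus a b = fadd a (fsmul (-1) b)" by (simp add: fdefs)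

lemma fsum_fzero: "fsum A (\<lambda>_. fzero) = fzero" by (simp add: fdefs)

lemma fsmul_fzero: "fsmul k fzero = fzero" by (simp add: fdefs)

lemma FA_I:
  assumes "finite {w. f w \<noteq> 0}" "\<And>w. f w \<noteq> 0 \<Longrightarrow> w \<noteq> [] \<and> set w \<subseteq> gens E0 E1"
  shows "f \<in> FA E0 E1"
  using assms unfolding FA_def by auto

lemma FA_finite_support: "f \<in> FA E0 E1 \<Longrightarrow> finite {w. f w \<noteq> 0}" unfolding FA_def by auto

lemma FA_support_word: "f \<in> FA E0 E1 \<Longrightarrow> f w \<noteq> 0 \<Longrightarrow> w \<noteq> [] \<and> set w \<subseteq> gens E0 E1" unfolding FA_def by auto

lemma FA_fzero: "fzero \<in> FA E0 E1" by (rule FA_I) (auto simp: fzero_def)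

lemma FA_fadd: assumes "a \<in> FA E0 E1" "b \<in> FA E0 E1" shows "fadd a b \<in> FA E0 E1"
proof (rule FA_I)
  have "{w. fadd a b w \<noteq> 0} \<subseteq> {w. a w \<noteq> 0} \<union> {w. b w \<noteq> 0}" by (auto simp: fadd_def)
  thus "finite {w. fadd a b w \<noteq> 0}" by (rule finite_subset) (simp add: FA_finite_support[OF assms(1)] FA_finite_support[OF assms(2)])
  fix w assume "fadd a b w \<noteq> 0"
  hence "a w \<noteq> 0 \<or> b w \<noteq> 0" by (auto simp: fadd_def)
  thus "w \<noteq> [] \<and> set w \<subseteq> gens E0 E1" using FA_support_word[OF assms(1)] FA_support_word[OF assms(2)] by blast
qed

lemma FA_fsmul: assumes "a \<in> FA E0 E1" shows "fsmul k a \<in> FA E0 E1"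
proof (rule FA_I)
  have "{w. fsmul k a w \<noteq> 0} \<subseteq> {w. a w \<noteq> 0}" by (auto simp: fsmul_def)
  thus "finite {w. fsmul k a w \<noteq> 0}" by (rule finite_subset) (simp add: FA_finite_support[OF assms(1)])
  fix w assume "fsmul k a w \<noteq> 0"
  hence "a w \<noteq> 0" by (auto simp: fsmul_def)
  thus "w \<noteq> [] \<and> set w \<subseteq> gens E0 E1" using FA_support_word[OF assms(1)] by blast
qed

lemma FA_fminus: "a \<in> FA E0 E1 \<Longrightarrow> b \<in> FA E0 E1 \<Longrightarrow> fminus a b \<in> FA E0 E1"
  by (simp add: fminus_eq FA_fadd FA_fsmul)

lemma FA_fsum: "finite A \<Longrightarrow> (\<And>i. i \<in> A \<Longrightarrow> f i \<in> FA E0 E1) \<Longrightarrow> fsum A f \<in> FA E0 E1"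
  by (induction A rule: finite_induct) (auto simp: fsum_insert FA_fzero FA_fadd)

lemma FA_fword: "w \<noteq> [] \<Longrightarrow> set w \<subseteq> gens E0 E1 \<Longrightarrow> fword w \<in> FA E0 E1"
  by (rule FA_I) (auto simp: fword_def split: if_splits)

lemma FA_fmul: assumes "a \<in> FA E0 E1" "b \<in> FA E0 E1" shows "fmul a b \<in> FA E0 E1"
proof (rule FA_I)
  let ?A = "{w. a w \<noteq> 0}" and ?B = "{w. b w \<noteq> 0}"
  have key: "\<exists>i. a (take i w) \<noteq> 0 \<and> b (drop i w) \<noteq> 0" if "fmul a b w \<noteq> 0" for w
  proof (rule ccontr)
    assume "\<not> ?thesis"
    hence "fmul a b w = 0" unfolding fmul_def by (intro sum.neutral) auto
    thus False using that by simp
  qed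
  have "{w. fmul a b w \<noteq> 0} \<subseteq> (\<lambda>(x,y). x@y) ` (?A \<times> ?B)"
  proof
    fix w assume "w \<in> {w. fmul a b w \<noteq> 0}"
    then obtain i where "a (take i w) \<noteq> 0" "b (drop i w) \<noteq> 0" using key by blast
    thus "w \<in> (\<lambda>(x,y). x@y) ` (?A \<times> ?B)" by (intro image_eqI[of _ _ "(take i w, drop i w)"]) auto
  qed
  thus "finite {w. fmul a b w \<noteq> 0}" by (rule finite_subset) (simp add: FA_finite_support[OF assms(1)] FA_finite_support[OF assms(2)])
  fix w assume "fmul a b w \<noteq> 0"
  then obtain i where "a (take i w) \<noteq> 0" "b (drop i w) \<noteq> 0" using key by blast
  hence "take i w \<noteq> [] \<and> set (take i w) \<subseteq> gens E0 E1" "drop i w \<noteq> [] \<and> set (drop i w) \<subseteq> gens E0 E1"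
    using FA_support_word[OF assms(1)] FA_support_word[OF assms(2)] by blast+
  moreover have "w = take i w @ drop i w" by simp
  ultimately show "w \<noteq> [] \<and> set w \<subseteq> gens E0 E1" by (metis Un_subset_iff append_is_Nil_conv set_append)
qed

lemma FA_eq_fword_sum:
  assumes "f \<in> FA E0 E1"
  shows "f = fsum {w. f w \<noteq> 0} (\<lambda>w. fsmul (f w) (fword w))"
proof (rule ext)
  fix z
  have fin: "finite {w. f w \<noteq> 0}" using FA_finite_support[OF assms] .
  show "f z = fsum {w. f w \<noteq> 0} (\<lambda>w. fsmul (f w) (fword w)) z"
    unfolding fsum_def fsmul_def fword_def using fin
    by (cases "f z = 0") (auto simp: sum.delta' if_distrib cong: if_cong)
qed

definition vtx :: "'v \<Rightarrow> ('v,'e) gen list \<Rightarrow> 'k::field" where "vtx v = fword [Vx v]"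

definition edge :: "'e \<Rightarrow> ('v,'e) gen list \<Rightarrow> 'k::field" where "edge e = fword [Ed e]"

definition ghost :: "'e \<Rightarrow> ('v,'e) gen list \<Rightarrow> 'k::field" where "ghost e = fword [Gh e]"

locale cohn_graph =
  fixes E0 :: "'v set" and E1 :: "'e set" and r s :: "'e \<Rightarrow> 'v" and X :: "'v set"
  assumes gr: "graph E0 E1 r s"
begin

lemma r_in_E0: "e \<in> E1 \<Longrightarrow> r e \<in> E0" using gr by (auto simp: graph_def)

lemma s_in_E0: "e \<in> E1 \<Longrightarrow> s e \<in> E0" using gr by (auto simp: graph_def)

definition eqv :: "(('v,'e) gen list \<Rightarrow> 'k::field) \<Rightarrow> (('v,'e) gen list \<Rightarrow> 'k) \<Rightarrow> bool" (infix "\<approx>" 50) where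
  "a \<approx> b \<longleftrightarrow> fminus a b \<in> cohn_ideal E0 E1 r s X"

lemma eqv_refl[simp]: "a \<approx> a"
proof -
  have "fminus a a = fzero" by (simp add: fdefs)
  thus ?thesis by (simp add: eqv_def cohn_ideal.zero)
qed

lemma eqv_sym: "a \<approx> b \<Longrightarrow> b \<approx> a"
proof -
  assume "a \<approx> b"
  hence "fsmul (-1) (fminus a b) \<in> cohn_ideal E0 E1 r s X" unfolding eqv_def by (rule cohn_ideal.smul)
  moreover have "fsmul (-1) (fminus a b) = fminus b a" by (simp add: fdefs)
  ultimately show ?thesis by (simp add: eqv_def)
qed

lemma eqv_trans[trans]: "a \<approx> b \<Longrightarrow> b \<approx> c \<Longrightarrow> a \<approx> c"
proof -
  assume "a \<approx> b" "b \<approx> c"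
  hence "fadd (fminus a b) (fminus b c) \<in> cohn_ideal E0 E1 r s X" unfolding eqv_def by (rule cohn_ideal.add)
  moreover have "fadd (fminus a b) (fminus b c) = fminus a c" by (simp add: fdefs)
  ultimately show ?thesis by (simp add: eqv_def)
qed

lemma eq_eqv_trans[trans]: "a = b \<Longrightarrow> b \<approx> c \<Longrightarrow> a \<approx> c" by simp

lemma eqv_eq_trans[trans]: "a \<approx> b \<Longrightarrow> b = c \<Longrightarrow> a \<approx> c" by simp

lemma eqv_add: "a \<approx> b \<Longrightarrow> c \<approx> d \<Longrightarrow> fadd a c \<approx> fadd b d"
proof -
  assume "a \<approx> b" "c \<approx> d"
  hence "fadd (fminus a b) (fminus c d) \<in> cohn_ideal E0 E1 r s X" unfolding eqv_def by (rule cohn_ideal.add)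
  moreover have "fadd (fminus a b) (fminus c d) = fminus (fadd a c) (fadd b d)" by (simp add: fdefs algebra_simps)
  ultimately show ?thesis by (simp add: eqv_def)
qed

lemma eqv_smul: "a \<approx> b \<Longrightarrow> fsmul k a \<approx> fsmul k b"
proof -
  assume "a \<approx> b"
  hence "fsmul k (fminus a b) \<in> cohn_ideal E0 E1 r s X" unfolding eqv_def by (rule cohn_ideal.smul)
  moreover have "fsmul k (fminus a b) = fminus (fsmul k a) (fsmul k b)" by (simp add: fdefs algebra_simps)
  ultimately show ?thesis by (simp add: eqv_def)
qed

lemma eqv_minus: "a \<approx> b \<Longrightarrow> c \<approx> d \<Longrightarrow> fminus a c \<approx> fminus b d"
  unfolding fminus_eq by (intro eqv_add eqv_smul)

lemma eqv_fsum: "finite A \<Longrightarrow> (\<And>i. i \<in> A \<Longrightarrow> f i \<approx> g i) \<Longrightarrow> fsum A f \<approx> fsum A g"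
  by (induction A rule: finite_induct) (auto simp: fsum_insert intro: eqv_add)

lemma eqv_lmul: "x \<in> FA E0 E1 \<Longrightarrow> a \<approx> b \<Longrightarrow> fmul x a \<approx> fmul x b"
  unfolding eqv_def fmul_fminus_right[symmetric] by (rule cohn_ideal.lmul)

lemma eqv_rmul: "x \<in> FA E0 E1 \<Longrightarrow> a \<approx> b \<Longrightarrow> fmul a x \<approx> fmul b x"
  unfolding eqv_def fmul_fminus_left[symmetric] by (rule cohn_ideal.rmul)

lemma eqv_zero_rmul: "a \<approx> fzero \<Longrightarrow> x \<in> FA E0 E1 \<Longrightarrow> fmul a x \<approx> fzero"
  using eqv_rmul[of x a fzero] by (simp add: fmul_fzero_left)

lemma eqv_neg_of_sum_zero:
  assumes "fadd a b \<approx> fzero" shows "a \<approx> fsmul (-1) b"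
proof -
  have "a = fminus (fadd a b) b" by (simp add: fdefs)
  also have "\<dots> \<approx> fminus fzero b" by (rule eqv_minus[OF assms eqv_refl])
  also have "fminus fzero b = fsmul (-1) b" by (simp add: fdefs)
  finally show ?thesis .
qed

lemma gens_Vx: "v \<in> E0 \<Longrightarrow> Vx v \<in> gens E0 E1" by (simp add: gens_def)

lemma gens_Ed: "e \<in> E1 \<Longrightarrow> Ed e \<in> gens E0 E1" by (simp add: gens_def)

lemma gens_Gh: "e \<in> E1 \<Longrightarrow> Gh e \<in> gens E0 E1" by (simp add: gens_def)

lemma FA_vtx: "v \<in> E0 \<Longrightarrow> vtx v \<in> FA E0 E1" by (simp add: vtx_def FA_fword gens_Vx)

lemma FA_edge: "e \<in> E1 \<Longrightarrow> edge e \<in> FA E0 E1" by (simp add: edge_def FA_fword gens_Ed)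

lemma FA_ghost: "e \<in> E1 \<Longrightarrow> ghost e \<in> FA E0 E1" by (simp add: ghost_def FA_fword gens_Gh)

lemma relI: "a \<in> cohn_rels E0 E1 r s X \<Longrightarrow> a \<in> cohn_ideal E0 E1 r s X" by (rule cohn_ideal.rel)

lemma rel_vtx_vtx:
  "v \<in> E0 \<Longrightarrow> w \<in> E0 \<Longrightarrow> fmul (vtx v) (vtx w) \<approx> (if v = w then vtx v else fzero)"
  unfolding eqv_def vtx_def fgen_eq_fword[symmetric] by (rule relI) (unfold cohn_rels_def, blast)

lemma vtx_idem: "v \<in> E0 \<Longrightarrow> fmul (vtx v) (vtx v) \<approx> vtx v" using rel_vtx_vtx[of v v] by simp

lemma rel_src_edge: "e \<in> E1 \<Longrightarrow> fmul (vtx (s e)) (edge e) \<approx> edge e"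
  unfolding eqv_def vtx_def edge_def fgen_eq_fword[symmetric] by (rule relI) (unfold cohn_rels_def, blast)

lemma rel_edge_range: "e \<in> E1 \<Longrightarrow> fmul (edge e) (vtx (r e)) \<approx> edge e"
  unfolding eqv_def vtx_def edge_def fgen_eq_fword[symmetric] by (rule relI) (unfold cohn_rels_def, blast)

lemma rel_range_ghost: "e \<in> E1 \<Longrightarrow> fmul (vtx (r e)) (ghost e) \<approx> ghost e"
  unfolding eqv_def vtx_def ghost_def fgen_eq_fword[symmetric] by (rule relI) (unfold cohn_rels_def, blast)

lemma rel_ghost_src: "e \<in> E1 \<Longrightarrow> fmul (ghost e) (vtx (s e)) \<approx> ghost e"
  unfolding eqv_def vtx_def ghost_def fgen_eq_fword[symmetric] by (rule relI) (unfold cohn_rels_def, blast)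

lemma rel_ghost_edge:
  "e \<in> E1 \<Longrightarrow> f \<in> E1 \<Longrightarrow> fmul (ghost e) (edge f) \<approx> (if e = f then vtx (r e) else fzero)"
  unfolding eqv_def vtx_def ghost_def edge_def fgen_eq_fword[symmetric]
  by (rule relI) (unfold cohn_rels_def, blast)

lemma gap_elem_eq:
  "gap_elem E1 s v = fminus (vtx v) (fsum {e \<in> E1. s e = v} (\<lambda>e. fmul (edge e) (ghost e)))"
  by (simp add: gap_elem_def vtx_def edge_def ghost_def fgen_eq_fword fsum_def)

lemma rel_CK: "v \<in> X \<Longrightarrow> vtx v \<approx> fsum {e \<in> E1. s e = v} (\<lambda>e. fmul (edge e) (ghost e))"
  unfolding eqv_def gap_elem_eq[symmetric] by (rule relI) (unfold cohn_rels_def, blast)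

primrec walk :: "'v \<Rightarrow> 'e list \<Rightarrow> 'v \<Rightarrow> bool" where
  "walk u [] v \<longleftrightarrow> u = v \<and> u \<in> E0"
| "walk u (e#es) v \<longleftrightarrow> e \<in> E1 \<and> s e = u \<and> walk (r e) es v"

primrec path_el :: "'v \<Rightarrow> 'e list \<Rightarrow> ('v,'e) gen list \<Rightarrow> 'k::field" where
  "path_el u [] = vtx u"
| "path_el u (e#es) = fmul (edge e) (path_el (r e) es)"

primrec ghost_el :: "'v \<Rightarrow> 'e list \<Rightarrow> ('v,'e) gen list \<Rightarrow> 'k::field" where
  "ghost_el u [] = vtx u"
| "ghost_el u (e#es) = fmul (ghost_el (r e) es) (ghost e)"

lemma walk_E0: "walk u p v \<Longrightarrow> u \<in> E0 \<and> v \<in> E0"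
  by (induction p arbitrary: u) (auto simp: s_in_E0)

lemma walk_E1: "walk u p v \<Longrightarrow> set p \<subseteq> E1"
  by (induction p arbitrary: u) auto

lemma walk_append: "walk u (a@b) v \<longleftrightarrow> (\<exists>m. walk u a m \<and> walk m b v)"
  by (induction a arbitrary: u) (auto dest: walk_E0)

lemma walk_det: "walk u p v \<Longrightarrow> walk u p v' \<Longrightarrow> v = v'"
  by (induction p arbitrary: u) auto

lemma walk_suffix: "walk u (a@b) w \<Longrightarrow> walk u a m \<Longrightarrow> walk m b w"
  by (auto simp: walk_append dest: walk_det)

lemma walk_hd: "walk u p v \<Longrightarrow> p \<noteq> [] \<Longrightarrow> s (hd p) = u"
  by (cases p) auto

lemma walk_last: "walk u p v \<Longrightarrow> p \<noteq> [] \<Longrightarrow> r (last p) = v"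
  by (induction p arbitrary: u) (auto split: if_splits)

lemma walk_consec: "walk u p v \<Longrightarrow> Suc i < length p \<Longrightarrow> r (p!i) = s (p!Suc i)"
proof (induction p arbitrary: u i)
  case Nil thus ?case by simp
next
  case (Cons e p)
  show ?case
  proof (cases i)
    case 0 thus ?thesis using Cons.prems by (cases p) auto
  next
    case (Suc k) thus ?thesis using Cons by auto
  qed
qed

lemma walk_take: "walk u p v \<Longrightarrow> j < length p \<Longrightarrow> walk u (take j p) (s (p!j))"
proof (induction p arbitrary: u j)
  case Nil thus ?case by simp
next
  case (Cons e p)
  show ?case
  proof (cases j)
    case 0 thus ?thesis using Cons.prems s_in_E0 by auto
  next
    case (Suc k) thus ?thesis using Cons by auto
  qed
qed

lemma FA_path_el: "walk u p v \<Longrightarrow> path_el u p \<in> FA E0 E1"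
  by (induction p arbitrary: u) (auto simp: FA_vtx FA_edge FA_fmul)

lemma FA_ghost_el: "walk u p v \<Longrightarrow> ghost_el u p \<in> FA E0 E1"
  by (induction p arbitrary: u) (auto simp: FA_vtx FA_ghost FA_fmul)

lemma vtx_path_el: "walk u p v \<Longrightarrow> fmul (vtx u) (path_el u p) \<approx> (path_el u p :: ('v,'e,'k::field) el)"
proof (cases p)
  case Nil
  assume "walk u p v" thus ?thesis using vtx_idem Nil by auto
next
  case (Cons e p')
  assume w: "walk u p v"
  hence "fmul (vtx u) (path_el u p :: ('v,'e,'k) el) = fmul (fmul (vtx (s e)) (edge e)) (path_el (r e) p')" using Cons by (simp add: fmul_assoc)
  also have "\<dots> \<approx> fmul (edge e) (path_el (r e) p')"
    using w Cons by (intro eqv_rmul rel_src_edge FA_path_el[of _ _ v]) auto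
  finally show ?thesis using Cons by simp
qed

lemma path_el_vtx: "walk u p v \<Longrightarrow> fmul (path_el u p) (vtx v) \<approx> (path_el u p :: ('v,'e,'k::field) el)"
proof (induction p arbitrary: u)
  case Nil thus ?case using vtx_idem by auto
next
  case (Cons e p)
  hence "fmul (path_el u (e#p) :: ('v,'e,'k) el) (vtx v) = fmul (edge e) (fmul (path_el (r e) p) (vtx v))" by (simp add: fmul_assoc)
  also have "\<dots> \<approx> fmul (edge e) (path_el (r e) p)" using Cons by (intro eqv_lmul FA_edge) auto
  finally show ?case by simp
qed

lemma path_el_append: "walk u a m \<Longrightarrow> walk m b v \<Longrightarrow> fmul (path_el u a) (path_el m b) \<approx> (path_el u (a@b) :: ('v,'e,'k::field) el)"
proof (induction a arbitrary: u)
  case Nil thus ?case using vtx_path_el by simp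
next
  case (Cons e a)
  hence "fmul (path_el u (e#a) :: ('v,'e,'k) el) (path_el m b) = fmul (edge e) (fmul (path_el (r e) a) (path_el m b))" by (simp add: fmul_assoc)
  also have "\<dots> \<approx> fmul (edge e) (path_el (r e) (a@b))" using Cons by (intro eqv_lmul FA_edge) auto
  finally show ?case by simp
qed

lemma path_el_mul_edge: assumes "walk u \<mu> w" "f \<in> E1" "s f = w"
  shows "fmul (path_el u \<mu>) (edge f) \<approx> (path_el u (\<mu>@[f]) :: ('v,'e,'k::field) el)"
proof -
  have wf: "walk w [f] (r f)" using assms r_in_E0 by simp
  have "fmul (path_el u \<mu>) (edge f) \<approx> (fmul (path_el u \<mu>) (path_el w [f]) :: ('v,'e,'k) el)"
    using eqv_sym[OF rel_edge_range[OF assms(2)]] by (intro eqv_lmul FA_path_el[OF assms(1)]) simp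
  also have "\<dots> \<approx> path_el u (\<mu>@[f])" using path_el_append[OF assms(1) wf] .
  finally show ?thesis .
qed

lemma ghost_el_vtx: "walk u p v \<Longrightarrow> fmul (ghost_el u p) (vtx u) \<approx> (ghost_el u p :: ('v,'e,'k::field) el)"
proof (cases p)
  case Nil
  assume "walk u p v" thus ?thesis using vtx_idem Nil by auto
next
  case (Cons e p')
  assume w: "walk u p v"
  hence "fmul (ghost_el u p :: ('v,'e,'k) el) (vtx u) = fmul (ghost_el (r e) p') (fmul (ghost e) (vtx (s e)))" using Cons by (simp add: fmul_assoc)
  also have "\<dots> \<approx> fmul (ghost_el (r e) p') (ghost e)"
    using w Cons by (intro eqv_lmul rel_ghost_src FA_ghost_el[of _ _ v]) auto
  finally show ?thesis using Cons by simp
qed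

lemma ghost_el_vtx_other: assumes "walk w n z" "v \<in> E0" "v \<noteq> w"
  shows "fmul (ghost_el w n) (vtx v) \<approx> (fzero :: ('v,'e,'k::field) el)"
proof -
  have w: "w \<in> E0" using walk_E0[OF assms(1)] by simp
  have "fmul (ghost_el w n) (vtx v) \<approx> (fmul (fmul (ghost_el w n) (vtx w)) (vtx v) :: ('v,'e,'k) el)"
    by (rule eqv_rmul[OF FA_vtx[OF assms(2)] eqv_sym[OF ghost_el_vtx[OF assms(1)]]])
  also have "\<dots> = fmul (ghost_el w n) (fmul (vtx w) (vtx v))" by (simp add: fmul_assoc)
  also have "\<dots> \<approx> fmul (ghost_el w n) fzero"
    using rel_vtx_vtx[OF w assms(2)] assms(3) by (intro eqv_lmul FA_ghost_el[OF assms(1)]) auto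
  finally show ?thesis by (simp add: fmul_fzero_right)
qed

lemma vtx_path_el_other: assumes "walk w m z" "v \<in> E0" "v \<noteq> w"
  shows "fmul (vtx v) (path_el w m) \<approx> (fzero :: ('v,'e,'k::field) el)"
proof -
  have w: "w \<in> E0" using walk_E0[OF assms(1)] by simp
  have "fmul (vtx v) (path_el w m) \<approx> (fmul (vtx v) (fmul (vtx w) (path_el w m)) :: ('v,'e,'k) el)"
    by (rule eqv_lmul[OF FA_vtx[OF assms(2)] eqv_sym[OF vtx_path_el[OF assms(1)]]])
  also have "\<dots> = fmul (fmul (vtx v) (vtx w)) (path_el w m)" by (simp add: fmul_assoc)
  also have "\<dots> \<approx> fmul fzero (path_el w m)"
    using rel_vtx_vtx[OF assms(2) w] assms(3) by (intro eqv_rmul FA_path_el[OF assms(1)]) auto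
  finally show ?thesis by (simp add: fmul_fzero_left)
qed

definition ghost_path_prod :: "'v \<Rightarrow> 'v \<Rightarrow> 'e list \<Rightarrow> 'e list \<Rightarrow> ('v,'e,'k::field) el" where
  "ghost_path_prod x y a b = (if take (length a) b = a then path_el x (drop (length a) b)
                 else if take (length b) a = b then ghost_el y (drop (length b) a) else fzero)"

lemma ghost_el_path_el: "walk u a x \<Longrightarrow> walk u b y \<Longrightarrow> fmul (ghost_el u a) (path_el u b) \<approx> (ghost_path_prod x y a b :: ('v,'e,'k::field) el)"
proof (induction a arbitrary: u b)
  case Nil
  hence "u = x" by simp
  thus ?case using vtx_path_el[OF Nil(2)] by (simp add: ghost_path_prod_def)
next
  case (Cons e a)
  show ?case
  proof (cases b)
    case Nil
    with Cons.prems have "u = y" by simp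
    thus ?thesis using ghost_el_vtx[OF Cons.prems(1)] Nil by (simp add: ghost_path_prod_def)
  next
    case Cons2: (Cons f b')
    have e: "e \<in> E1" "s e = u" "walk (r e) a x" using Cons.prems by auto
    have f: "f \<in> E1" "s f = u" "walk (r f) b' y" using Cons.prems Cons2 by auto
    have "fmul (ghost_el u (e#a)) (path_el u b) = (fmul (ghost_el (r e) a) (fmul (fmul (ghost e) (edge f)) (path_el (r f) b')) :: ('v,'e,'k) el)"
      using Cons2 by (simp add: fmul_assoc)
    also have "\<dots> \<approx> fmul (ghost_el (r e) a) (fmul (if e = f then vtx (r e) else fzero) (path_el (r f) b'))"
      using e f by (intro eqv_lmul eqv_rmul rel_ghost_edge FA_ghost_el FA_path_el) auto
    finally have cancel: "fmul (ghost_el u (e#a)) (path_el u b) \<approx> (fmul (ghost_el (r e) a) (fmul (if e = f then vtx (r e) else fzero) (path_el (r f) b')) :: ('v,'e,'k) el)" .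
    show ?thesis
    proof (cases "e = f")
      case True
      have "fmul (ghost_el (r e) a) (fmul (vtx (r e)) (path_el (r f) b')) \<approx> (fmul (ghost_el (r e) a) (path_el (r e) b') :: ('v,'e,'k) el)"
        using True eqv_lmul[OF FA_ghost_el[OF e(3)] vtx_path_el[OF f(3)]] by simp
      also have "\<dots> \<approx> ghost_path_prod x y a b'" using Cons.IH e f True by auto
      also have "ghost_path_prod x y a b' = (ghost_path_prod x y (e#a) b :: ('v,'e,'k) el)" using Cons2 True by (simp add: ghost_path_prod_def)
      finally have tail: "fmul (ghost_el (r e) a) (fmul (vtx (r e)) (path_el (r f) b')) \<approx> (ghost_path_prod x y (e#a) b :: ('v,'e,'k) el)" .
      from cancel have "fmul (ghost_el u (e#a)) (path_el u b) \<approx> (fmul (ghost_el (r e) a) (fmul (vtx (r e)) (path_el (r f) b')) :: ('v,'e,'k) el)"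
        using True by simp
      thus ?thesis using tail by (rule eqv_trans)
    next
      case False
      have "ghost_path_prod x y (e#a) b = (fzero :: ('v,'e,'k) el)" using Cons2 False by (simp add: ghost_path_prod_def)
      thus ?thesis using cancel False by (simp add: fmul_fzero_left fmul_fzero_right)
    qed
  qed
qed

lemma ghost_el_path_el_self: "walk w lam z \<Longrightarrow> fmul (ghost_el w lam) (path_el w lam) \<approx> vtx z"
  using ghost_el_path_el[of w lam z lam z] by (simp add: ghost_path_prod_def)

lemma ghost_el_vtx_path_el:
  "walk w lam z \<Longrightarrow> fmul (ghost_el w lam) (fmul (vtx w) (path_el w lam)) \<approx> vtx z"
  by (meson eqv_lmul eqv_trans FA_ghost_el vtx_path_el ghost_el_path_el_self)

lemma ghost_el_exit_path_el:
  assumes \<tau>: "walk w \<tau> w" "\<tau> \<noteq> []" and lam: "walk w lam z" and exit: "take (length lam) (\<tau> @ lam) \<noteq> lam"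
  shows "fmul (ghost_el w lam) (fmul (path_el w \<tau>) (path_el w lam)) \<approx> fzero"
proof -
  have "fmul (ghost_el w lam) (fmul (path_el w \<tau>) (path_el w lam)) \<approx> fmul (ghost_el w lam) (path_el w (\<tau> @ lam))"
    using \<tau> lam by (intro eqv_lmul FA_ghost_el path_el_append)
  also have "\<dots> \<approx> ghost_path_prod z z lam (\<tau> @ lam)"
    using \<tau> lam by (intro ghost_el_path_el) (auto simp: walk_append)
  also have "\<dots> = fzero"
    using exit \<tau>(2) by (simp add: ghost_path_prod_def)
  finally show ?thesis .
qed

section \<open>The spanning set of the elements \<open>\<mu>\<nu>\<^sup>*\<close>\<close>

text \<open>The index \<open>(u, \<mu>, w, \<nu>)\<close> stands for \<open>\<mu>\<nu>\<^sup>*\<close>, where \<open>\<mu>\<close> starts at \<open>u\<close> and \<open>\<nu>\<close> at \<open>w\<close>;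
  the start vertices are recorded because the walks may be empty.\<close>
fun pg_el :: "'v \<times> 'e list \<times> 'v \<times> 'e list \<Rightarrow> ('v,'e,'k::field) el" where
  "pg_el (u, m, w, n) = fmul (path_el u m) (ghost_el w n)"

fun admissible :: "'v \<times> 'e list \<times> 'v \<times> 'e list \<Rightarrow> bool" where
  "admissible (u, m, w, n) \<longleftrightarrow> (\<exists>z. walk u m z \<and> walk w n z)"

lemma FA_pg_el: "admissible t \<Longrightarrow> pg_el t \<in> FA E0 E1"
  by (cases t) (auto intro: FA_fmul FA_path_el FA_ghost_el)

lemma pg_mul_edge_Nil:
  assumes "admissible (u, m, w, [])" "e \<in> E1" "s e = w"
  shows "fmul (pg_el (u, m, w, [])) (edge e) \<approx> (pg_el (u, m @ [e], r e, []) :: ('v,'e,'k::field) el)"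
proof -
  have m: "walk u m w" and me: "walk u (m @ [e]) (r e)"
    using assms r_in_E0 by (auto simp: walk_append)
  have "fmul (pg_el (u, m, w, [])) (edge e) = (fmul (path_el u m) (fmul (vtx (s e)) (edge e)) :: ('v,'e,'k) el)"
    using assms(3) by (simp add: fmul_assoc)
  also have "\<dots> \<approx> fmul (path_el u m) (edge e)" by (intro eqv_lmul FA_path_el[OF m] rel_src_edge assms(2))
  also have "\<dots> \<approx> path_el u (m @ [e])" by (rule path_el_mul_edge[OF m assms(2,3)])
  also have "\<dots> \<approx> fmul (path_el u (m @ [e])) (vtx (r e))" by (rule eqv_sym[OF path_el_vtx[OF me]])
  finally show ?thesis by simp
qed

lemma pg_mul_edge_Cons: assumes "admissible (u, m, w, e#n)"
  shows "fmul (pg_el (u, m, w, e#n)) (edge e) \<approx> (pg_el (u, m, r e, n) :: ('v,'e,'k::field) el)"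
proof -
  obtain z where wm: "walk u m z" and wn: "walk w (e#n) z" using assms by auto
  have e: "e \<in> E1" "walk (r e) n z" using wn by auto
  have "fmul (pg_el (u, m, w, e#n)) (edge e) = (fmul (path_el u m) (fmul (ghost_el (r e) n) (fmul (ghost e) (edge e))) :: ('v,'e,'k) el)"
    by (simp add: fmul_assoc)
  also have "\<dots> \<approx> fmul (path_el u m) (fmul (ghost_el (r e) n) (vtx (r e)))"
    using rel_ghost_edge[OF e(1) e(1)] by (intro eqv_lmul FA_path_el[OF wm] FA_ghost_el[OF e(2)]) simp
  also have "\<dots> \<approx> fmul (path_el u m) (ghost_el (r e) n)" by (intro eqv_lmul FA_path_el[OF wm] ghost_el_vtx[OF e(2)])
  finally show ?thesis by simp
qed

lemma pg_mul_edge_other: assumes "admissible (u, m, w, f#n)" "e \<in> E1" "f \<noteq> e"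
  shows "fmul (pg_el (u, m, w, f#n)) (edge e) \<approx> (fzero :: ('v,'e,'k::field) el)"
proof -
  obtain z where wm: "walk u m z" and wn: "walk w (f#n) z" using assms by auto
  have f: "f \<in> E1" "walk (r f) n z" using wn by auto
  have "fmul (pg_el (u, m, w, f#n)) (edge e) = (fmul (path_el u m) (fmul (ghost_el (r f) n) (fmul (ghost f) (edge e))) :: ('v,'e,'k) el)"
    by (simp add: fmul_assoc)
  also have "\<dots> \<approx> fmul (path_el u m) (fmul (ghost_el (r f) n) fzero)"
    using rel_ghost_edge[OF f(1) assms(2)] assms(3) by (intro eqv_lmul FA_path_el[OF wm] FA_ghost_el[OF f(2)]) simp
  finally show ?thesis by (simp add: fmul_fzero_right)
qed

lemma pg_mul_vtx: assumes "admissible (u, m, w, n)"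
  shows "fmul (pg_el (u, m, w, n)) (vtx w) \<approx> (pg_el (u, m, w, n) :: ('v,'e,'k::field) el)"
proof -
  obtain z where wm: "walk u m z" and wn: "walk w n z" using assms by auto
  have "fmul (pg_el (u, m, w, n)) (vtx w) = (fmul (path_el u m) (fmul (ghost_el w n) (vtx w)) :: ('v,'e,'k) el)"
    by (simp add: fmul_assoc)
  also have "\<dots> \<approx> fmul (path_el u m) (ghost_el w n)" by (intro eqv_lmul FA_path_el[OF wm] ghost_el_vtx[OF wn])
  finally show ?thesis by simp
qed

lemma pg_mul_vtx_other: assumes "admissible (u, m, w, n)" "v \<in> E0" "v \<noteq> w"
  shows "fmul (pg_el (u, m, w, n)) (vtx v) \<approx> (fzero :: ('v,'e,'k::field) el)"
proof -
  obtain z where wm: "walk u m z" and wn: "walk w n z" using assms by auto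
  have "fmul (pg_el (u, m, w, n)) (vtx v) = (fmul (path_el u m) (fmul (ghost_el w n) (vtx v)) :: ('v,'e,'k) el)"
    by (simp add: fmul_assoc)
  also have "\<dots> \<approx> fmul (path_el u m) fzero" by (intro eqv_lmul FA_path_el[OF wm] ghost_el_vtx_other[OF wn assms(2,3)])
  finally show ?thesis by (simp add: fmul_fzero_right)
qed

lemma pg_mul_edge_other_src:
  assumes "admissible (u, m, w, n)" "f \<in> E1" "s f \<noteq> w"
  shows "fmul (pg_el (u, m, w, n)) (edge f) \<approx> (fzero :: ('v,'e,'k::field) el)"
proof -
  have "fmul (pg_el (u, m, w, n)) (edge f) \<approx> (fmul (pg_el (u, m, w, n)) (fmul (vtx (s f)) (edge f)) :: ('v,'e,'k) el)"
    using assms by (intro eqv_lmul FA_pg_el eqv_sym[OF rel_src_edge])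
  also have "\<dots> = fmul (fmul (pg_el (u, m, w, n)) (vtx (s f))) (edge f)" by (simp only: fmul_assoc)
  also have "\<dots> \<approx> fmul fzero (edge f)"
    using assms s_in_E0 by (intro eqv_rmul FA_edge pg_mul_vtx_other) auto
  finally show ?thesis by (simp add: fmul_fzero_left)
qed

lemma pg_mul_ghost: "r f = w \<Longrightarrow> fmul (pg_el (u, m, w, n)) (ghost f) = pg_el (u, m, s f, f # n)"
  by (simp add: fmul_assoc)

lemma pg_mul_ghost_other:
  assumes "admissible (u, m, w, n)" "f \<in> E1" "r f \<noteq> w"
  shows "fmul (pg_el (u, m, w, n)) (ghost f) \<approx> (fzero :: ('v,'e,'k::field) el)"
proof -
  have "fmul (pg_el (u, m, w, n)) (ghost f) \<approx> (fmul (pg_el (u, m, w, n)) (fmul (vtx (r f)) (ghost f)) :: ('v,'e,'k) el)"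
    using assms by (intro eqv_lmul FA_pg_el eqv_sym[OF rel_range_ghost])
  also have "\<dots> = fmul (fmul (pg_el (u, m, w, n)) (vtx (r f))) (ghost f)" by (simp only: fmul_assoc)
  also have "\<dots> \<approx> fmul fzero (ghost f)"
    using assms r_in_E0 by (intro eqv_rmul FA_ghost pg_mul_vtx_other) auto
  finally show ?thesis by (simp add: fmul_fzero_left)
qed

lemma pg_mul_gen:
  assumes t: "admissible t" and g: "g \<in> gens E0 E1"
  shows "fmul (pg_el t) (fword [g]) \<approx> (fzero :: ('v,'e,'k::field) el)
       \<or> (\<exists>t'. admissible t' \<and> fmul (pg_el t) (fword [g]) \<approx> (pg_el t' :: ('v,'e,'k) el))"
proof -
  obtain u m w n where tt: "t = (u, m, w, n)" by (cases t)
  have adm: "admissible (u, m, w, n)" using t tt by simp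
  then obtain z where m: "walk u m z" and n: "walk w n z" by auto
  consider (vx) v where "g = Vx v" "v \<in> E0" | (ed) f where "g = Ed f" "f \<in> E1"
    | (gh) f where "g = Gh f" "f \<in> E1"
    using g by (auto simp: gens_def)
  thus ?thesis
  proof cases
    case vx
    show ?thesis
    proof (cases "v = w")
      case True
      thus ?thesis using pg_mul_vtx[OF adm] t vx tt by (intro disjI2 exI[of _ t]) (simp add: vtx_def)
    next
      case False
      thus ?thesis using pg_mul_vtx_other[OF adm vx(2)] vx tt by (intro disjI1) (simp add: vtx_def)
    qed
  next
    case ed
    consider "s f \<noteq> w" | "n = []" "s f = w" | n' where "n = f # n'" | e n' where "n = e # n'" "e \<noteq> f"
      by (cases n) auto
    thus ?thesis
    proof cases
      case 1
      thus ?thesis using pg_mul_edge_other_src[OF adm ed(2)] ed tt by (intro disjI1) (simp add: edge_def)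
    next
      case 2
      have "admissible (u, m @ [f], r f, [])" using 2 m n ed r_in_E0 by (auto simp: walk_append)
      thus ?thesis using pg_mul_edge_Nil[of u m w f] adm 2 ed tt
        by (intro disjI2 exI[of _ "(u, m @ [f], r f, [])"]) (simp add: edge_def)
    next
      case (3 n')
      have "admissible (u, m, r f, n')" using 3 m n by auto
      thus ?thesis using pg_mul_edge_Cons[of u m w f n'] adm 3 ed tt
        by (intro disjI2 exI[of _ "(u, m, r f, n')"]) (simp add: edge_def)
    next
      case (4 e n')
      thus ?thesis using pg_mul_edge_other[of u m w e n' f] adm ed tt by (intro disjI1) (simp add: edge_def)
    qed
  next
    case gh
    show ?thesis
    proof (cases "r f = w")
      case True
      have adm': "admissible (u, m, s f, f # n)" using True m n gh by auto
      have "fmul (pg_el t) (fword [g]) = (pg_el (u, m, s f, f # n) :: ('v,'e,'k) el)"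
        using pg_mul_ghost[OF True, of u m n] gh tt by (simp add: ghost_def)
      thus ?thesis using adm' by (intro disjI2 exI[of _ "(u, m, s f, f # n)"] conjI) simp_all
    next
      case False
      thus ?thesis using pg_mul_ghost_other[OF adm gh(2)] gh tt by (intro disjI1) (simp add: ghost_def)
    qed
  qed
qed

lemma vtx_mul_pg: assumes "admissible (u, m, w, n)"
  shows "fmul (vtx u) (pg_el (u, m, w, n)) \<approx> (pg_el (u, m, w, n) :: ('v,'e,'k::field) el)"
proof -
  obtain z where wm: "walk u m z" and wn: "walk w n z" using assms by auto
  have "fmul (vtx u) (pg_el (u, m, w, n)) = (fmul (fmul (vtx u) (path_el u m)) (ghost_el w n) :: ('v,'e,'k) el)"
    by (simp add: fmul_assoc)
  also have "\<dots> \<approx> fmul (path_el u m) (ghost_el w n)" by (intro eqv_rmul FA_ghost_el[OF wn] vtx_path_el[OF wm])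
  finally show ?thesis by simp
qed

lemma vtx_mul_pg_other: assumes "admissible (u, m, w, n)" "v \<in> E0" "v \<noteq> u"
  shows "fmul (vtx v) (pg_el (u, m, w, n)) \<approx> (fzero :: ('v,'e,'k::field) el)"
proof -
  obtain z where wm: "walk u m z" and wn: "walk w n z" using assms by auto
  have "fmul (vtx v) (pg_el (u, m, w, n)) = (fmul (fmul (vtx v) (path_el u m)) (ghost_el w n) :: ('v,'e,'k) el)"
    by (simp add: fmul_assoc)
  also have "\<dots> \<approx> fmul fzero (ghost_el w n)" by (intro eqv_rmul FA_ghost_el[OF wn] vtx_path_el_other[OF wm assms(2,3)])
  finally show ?thesis by (simp add: fmul_fzero_left)
qed

lemma vtx_pg_vtx:
  assumes vt: "admissible t" and u0: "u \<in> E0" and w0: "w \<in> E0"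
  shows "fmul (vtx u) (fmul (pg_el t) (vtx w)) \<approx> (if fst t = u \<and> fst (snd (snd t)) = w then pg_el t else fzero)"
proof -
  obtain u' \<mu> w' \<nu> where tt: "t = (u', \<mu>, w', \<nu>)" by (cases t) auto
  have v: "admissible (u', \<mu>, w', \<nu>)" using vt tt by simp
  have "fmul (pg_el t) (vtx w) \<approx> (if w' = w then pg_el t else fzero)"
    using pg_mul_vtx[OF v] pg_mul_vtx_other[OF v w0] tt by auto
  hence "fmul (vtx u) (fmul (pg_el t) (vtx w)) \<approx> fmul (vtx u) (if w' = w then pg_el t else fzero)"
    by (rule eqv_lmul[OF FA_vtx[OF u0]])
  also have "\<dots> \<approx> (if u' = u \<and> w' = w then pg_el t else fzero)"
  proof (cases "w' = w")
    case True
    thus ?thesis using vtx_mul_pg[OF v] vtx_mul_pg_other[OF v u0] tt by auto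
  next
    case False
    thus ?thesis by (simp add: fmul_fzero_right)
  qed
  finally show ?thesis using tt by simp
qed

lemma pg_eqv_edge_ghost: assumes "admissible (u, m, w, e#n)"
  shows "pg_el (u, m, w, e#n) \<approx> (fmul (fmul (pg_el (u, m, w, e#n)) (edge e)) (ghost e) :: ('v,'e,'k::field) el)"
proof -
  have e: "e \<in> E1" using assms by auto
  have "fmul (fmul (pg_el (u, m, w, e#n)) (edge e)) (ghost e) \<approx> (fmul (pg_el (u, m, r e, n)) (ghost e) :: ('v,'e,'k) el)"
    by (intro eqv_rmul FA_ghost e pg_mul_edge_Cons assms)
  also have "\<dots> = pg_el (u, m, w, e#n)" by (simp add: fmul_assoc)
  finally show ?thesis by (rule eqv_sym)
qed

lemma gen_eqv_pg:
  assumes "g \<in> gens E0 E1"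
  shows "\<exists>t. admissible t \<and> fword [g] \<approx> (pg_el t :: ('v,'e,'k::field) el)"
proof -
  consider (vx) v where "g = Vx v" "v \<in> E0" | (ed) f where "g = Ed f" "f \<in> E1" | (gh) f where "g = Gh f" "f \<in> E1"
    using assms by (auto simp: gens_def)
  thus ?thesis
  proof cases
    case vx
    have "fword [g] \<approx> (pg_el (v, [], v, []) :: ('v,'e,'k) el)"
      using vx eqv_sym[OF vtx_idem[OF vx(2)]] by (simp add: vtx_def)
    thus ?thesis using vx by (intro exI[of _ "(v, [], v, [])"]) auto
  next
    case ed
    have "fword [g] = (edge f :: ('v,'e,'k) el)" using ed by (simp add: edge_def)
    also have "\<dots> \<approx> fmul (edge f) (vtx (r f))" by (rule eqv_sym[OF rel_edge_range[OF ed(2)]])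
    also have "\<dots> \<approx> fmul (fmul (edge f) (vtx (r f))) (vtx (r f))"
      by (intro eqv_rmul FA_vtx r_in_E0 ed eqv_sym[OF rel_edge_range[OF ed(2)]])
    also have "\<dots> = pg_el (s f, [f], r f, [])" by simp
    finally show ?thesis using ed r_in_E0[OF ed(2)] by (intro exI[of _ "(s f, [f], r f, [])"]) auto
  next
    case gh
    have "fword [g] = (ghost f :: ('v,'e,'k) el)" using gh by (simp add: ghost_def)
    also have "\<dots> \<approx> fmul (vtx (r f)) (ghost f)" by (rule eqv_sym[OF rel_range_ghost[OF gh(2)]])
    also have "\<dots> \<approx> fmul (vtx (r f)) (fmul (vtx (r f)) (ghost f))"
      by (intro eqv_lmul FA_vtx r_in_E0 gh eqv_sym[OF rel_range_ghost[OF gh(2)]])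
    also have "\<dots> = pg_el (r f, [], s f, [f])" by simp
    finally show ?thesis using gh r_in_E0[OF gh(2)] by (intro exI[of _ "(r f, [], s f, [f])"]) auto
  qed
qed

lemma fword_eqv_pg:
  "z \<noteq> [] \<Longrightarrow> set z \<subseteq> gens E0 E1 \<Longrightarrow> fword z \<approx> (fzero :: ('v,'e,'k::field) el) \<or> (\<exists>t. admissible t \<and> fword z \<approx> (pg_el t :: ('v,'e,'k) el))"
proof (induction z rule: rev_induct)
  case Nil thus ?case by simp
next
  case (snoc g z)
  have g: "g \<in> gens E0 E1" using snoc.prems by simp
  show ?case
  proof (cases "z = []")
    case True
    obtain t where t: "admissible t" "fword [g] \<approx> (pg_el t :: ('v,'e,'k) el)" using gen_eqv_pg[OF g, where 'k='k] by blast
    show ?thesis using True t by (intro disjI2 exI[of _ t]) simp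
  next
    case False
    have FAg: "fword [g] \<in> FA E0 E1" using g by (intro FA_fword) auto
    have eq: "fword (z@[g]) = (fmul (fword z) (fword [g]) :: ('v,'e,'k) el)" using False by (simp add: fmul_fword)
    from snoc.IH[OF False] snoc.prems
    have "fword z \<approx> (fzero :: ('v,'e,'k::field) el) \<or> (\<exists>t. admissible t \<and> fword z \<approx> (pg_el t :: ('v,'e,'k) el))" by simp
    thus ?thesis
    proof
      assume "fword z \<approx> (fzero :: ('v,'e,'k::field) el)"
      hence "fmul (fword z) (fword [g]) \<approx> (fmul fzero (fword [g]) :: ('v,'e,'k) el)" by (rule eqv_rmul[OF FAg])
      thus ?thesis unfolding eq by (simp add: fmul_fzero_left)
    next
      assume "\<exists>t. admissible t \<and> fword z \<approx> (pg_el t :: ('v,'e,'k) el)"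
      then obtain t where t: "admissible t" "fword z \<approx> (pg_el t :: ('v,'e,'k) el)" by blast
      hence zg: "fmul (fword z) (fword [g]) \<approx> (fmul (pg_el t) (fword [g]) :: ('v,'e,'k) el)" by (intro eqv_rmul FAg)
      from pg_mul_gen[OF t(1) g]
      have "fmul (pg_el t) (fword [g]) \<approx> (fzero :: ('v,'e,'k::field) el) \<or> (\<exists>t'. admissible t' \<and> fmul (pg_el t) (fword [g]) \<approx> (pg_el t' :: ('v,'e,'k) el))" .
      thus ?thesis unfolding eq using zg eqv_trans by blast
    qed
  qed
qed

definition comb :: "('v \<times> 'e list \<times> 'v \<times> 'e list) set \<Rightarrow> ('v \<times> 'e list \<times> 'v \<times> 'e list \<Rightarrow> 'k) \<Rightarrow> ('v,'e,'k::field) el" where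
  "comb S c = fsum S (\<lambda>t. fsmul (c t) (pg_el t))"

lemma FA_eqv_comb:
  assumes "f \<in> FA E0 E1"
  shows "\<exists>S c. finite S \<and> (\<forall>t\<in>S. admissible t) \<and> f \<approx> (comb S c :: ('v,'e,'k::field) el)"
proof -
  define Z where "Z = {w. f w \<noteq> 0}"
  have finZ: "finite Z" using FA_finite_support[OF assms] by (simp add: Z_def)
  define Z1 where "Z1 = {w\<in>Z. \<exists>t. admissible t \<and> fword w \<approx> (pg_el t :: ('v,'e,'k) el)}"
  define T where "T w = (SOME t. admissible t \<and> fword w \<approx> (pg_el t :: ('v,'e,'k) el))" for w
  have T: "admissible (T w) \<and> fword w \<approx> (pg_el (T w) :: ('v,'e,'k) el)" if "w \<in> Z1" for w
    using that unfolding Z1_def T_def by (metis (mono_tags, lifting) mem_Collect_eq someI_ex)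
  have "f = fsum Z (\<lambda>w. fsmul (f w) (fword w))" unfolding Z_def by (rule FA_eq_fword_sum[OF assms])
  also have "\<dots> \<approx> fsum Z (\<lambda>w. if w \<in> Z1 then fsmul (f w) (pg_el (T w)) else fzero)"
  proof (rule eqv_fsum[OF finZ])
    fix w assume wZ: "w \<in> Z"
    hence ne: "w \<noteq> [] \<and> set w \<subseteq> gens E0 E1" using FA_support_word[OF assms] by (auto simp: Z_def)
    show "fsmul (f w) (fword w) \<approx> (if w \<in> Z1 then fsmul (f w) (pg_el (T w)) else fzero)"
    proof (cases "w \<in> Z1")
      case True thus ?thesis using T[OF True] by (simp add: eqv_smul)
    next
      case False
      hence "fword w \<approx> (fzero :: ('v,'e,'k) el)" using fword_eqv_pg[of w, where 'k='k] ne wZ unfolding Z1_def by blast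
      hence "fsmul (f w) (fword w) \<approx> (fsmul (f w) fzero :: ('v,'e,'k) el)" by (rule eqv_smul)
      thus ?thesis using False by (simp add: fsmul_def fzero_def)
    qed
  qed
  also have "\<dots> = fsum Z1 (\<lambda>w. fsmul (f w) (pg_el (T w)))"
    unfolding fsum_def fzero_def
  proof (rule ext)
    fix x
    have "Z1 \<subseteq> Z" by (auto simp: Z1_def)
    thus "(\<Sum>i\<in>Z. (if i \<in> Z1 then fsmul (f i) (pg_el (T i)) else (\<lambda>w. 0)) x) = (\<Sum>i\<in>Z1. fsmul (f i) (pg_el (T i)) x)"
      using finZ by (intro sum.mono_neutral_cong_right) auto
  qed
  also have "\<dots> = comb (T ` Z1) (\<lambda>t. \<Sum>w\<in>{w\<in>Z1. T w = t}. f w)"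
    unfolding comb_def fsum_def fsmul_def
  proof (rule ext)
    fix x
    have finZ1: "finite Z1" using finZ by (auto simp: Z1_def)
    have "(\<Sum>w\<in>Z1. f w * pg_el (T w) x) = (\<Sum>t\<in>T ` Z1. \<Sum>w\<in>{w\<in>Z1. T w = t}. f w * pg_el (T w) x)"
      by (rule sum.image_gen[OF finZ1])
    also have "\<dots> = (\<Sum>t\<in>T ` Z1. (\<Sum>w\<in>{w\<in>Z1. T w = t}. f w) * pg_el t x)"
      by (rule sum.cong) (auto simp: sum_distrib_right)
    finally show "(\<Sum>w\<in>Z1. f w * pg_el (T w) x) = (\<Sum>t\<in>T ` Z1. (\<Sum>w\<in>{w\<in>Z1. T w = t}. f w) * pg_el t x)" .
  qed
  finally show ?thesis using finZ T by (intro exI[of _ "T ` Z1"] exI conjI) (auto simp: Z1_def)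
qed

lemma comb_zero: "(\<And>t. t \<in> S \<Longrightarrow> c t = 0) \<Longrightarrow> comb S c = (fzero :: ('v,'e,'k::field) el)"
  unfolding comb_def fsum_def fsmul_def fzero_def by simp

lemma FA_comb: "finite S \<Longrightarrow> (\<And>t. t \<in> S \<Longrightarrow> admissible t) \<Longrightarrow> comb S c \<in> FA E0 E1"
  unfolding comb_def by (intro FA_fsum FA_fsmul FA_pg_el) auto

lemma comb_split: "finite S \<Longrightarrow> comb S c = fadd (comb {t\<in>S. Q t} c) (comb {t\<in>S. \<not> Q t} c)"
proof -
  assume fin: "finite S"
  have S: "S = {t\<in>S. Q t} \<union> {t\<in>S. \<not> Q t}" by auto
  show ?thesis unfolding comb_def fsum_def fadd_def
  proof (rule ext)
    fix x
    have "(\<Sum>t\<in>S. fsmul (c t) (pg_el t) x) = (\<Sum>t\<in>{t\<in>S. Q t} \<union> {t\<in>S. \<not> Q t}. fsmul (c t) (pg_el t) x)"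
      using S by simp
    also have "\<dots> = (\<Sum>t\<in>{t\<in>S. Q t}. fsmul (c t) (pg_el t) x) + (\<Sum>t\<in>{t\<in>S. \<not> Q t}. fsmul (c t) (pg_el t) x)"
      using fin by (intro sum.union_disjoint) auto
    finally show "(\<Sum>t\<in>S. fsmul (c t) (pg_el t) x) = (\<Sum>t\<in>{t\<in>S. Q t}. fsmul (c t) (pg_el t) x) + (\<Sum>t\<in>{t\<in>S. \<not> Q t}. fsmul (c t) (pg_el t) x)" .
  qed
qed

lemma comb_mul_eqv:
  assumes "finite S" and "\<And>t. t \<in> S \<Longrightarrow> fmul (pg_el t) x \<approx> y t"
  shows "fmul (comb S c) x \<approx> (fsum S (\<lambda>t. fsmul (c t) (y t)) :: ('v,'e,'k::field) el)"
  unfolding comb_def fmul_fsum_left fmul_fsmul_left using assms by (intro eqv_fsum eqv_smul)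

section \<open>Gap idempotents\<close>

definition out_edges :: "'v \<Rightarrow> 'e set" where "out_edges w = {e\<in>E1. s e = w}"

lemma regular_out_edges_finite: "w \<in> Reg E0 E1 s \<Longrightarrow> finite (out_edges w) \<and> w \<in> E0"
  by (simp add: Reg_def regular_vertex_def out_edges_def)

definition gap :: "'v \<Rightarrow> ('v,'e,'k::field) el" where
  "gap w = fminus (vtx w) (fsum (out_edges w) (\<lambda>e. fmul (edge e) (ghost e)))"

lemma gap_eq_gap_elem: "gap w = gap_elem E1 s w" by (simp add: gap_def gap_elem_eq out_edges_def)

context
  fixes w assumes wR: "w \<in> Reg E0 E1 s"
begin

lemma finite_out_edges: "finite (out_edges w)" and regular_in_E0: "w \<in> E0" using regular_out_edges_finite[OF wR] by auto

lemma FA_gap: "gap w \<in> FA E0 E1"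
  unfolding gap_def using finite_out_edges regular_in_E0
  by (intro FA_fminus FA_vtx FA_fsum FA_fmul FA_edge FA_ghost) (auto simp: out_edges_def)

lemma gap_mul_edge: assumes f: "f \<in> E1" "s f = w" shows "fmul (gap w) (edge f) \<approx> (fzero :: ('v,'e,'k::field) el)"
proof -
  have "fmul (gap w) (edge f) = (fminus (fmul (vtx w) (edge f)) (fsum (out_edges w) (\<lambda>e. fmul (edge e) (fmul (ghost e) (edge f)))) :: ('v,'e,'k) el)"
    unfolding gap_def by (simp add: fmul_fminus_left fmul_fsum_left fmul_assoc)
  also have "\<dots> \<approx> fminus (edge f) (fsum (out_edges w) (\<lambda>e. fmul (edge e) (if e = f then vtx (r e) else fzero)))"
    using finite_out_edges f rel_src_edge[OF f(1)] by (intro eqv_minus eqv_fsum eqv_lmul rel_ghost_edge FA_edge) (auto simp: out_edges_def)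
  also have "fsum (out_edges w) (\<lambda>e. fmul (edge e) (if e = f then vtx (r e) else fzero)) = fsum (out_edges w) (\<lambda>e. if e = f then fmul (edge f) (vtx (r f)) else (fzero :: ('v,'e,'k) el))"
    by (rule fsum_cong) (simp add: fmul_fzero_right)
  also have "\<dots> = fmul (edge f) (vtx (r f))" using finite_out_edges f by (intro fsum_delta) (auto simp: out_edges_def)
  also have "fminus (edge f) (fmul (edge f) (vtx (r f))) \<approx> fminus (edge f) (edge f)"
    by (intro eqv_minus eqv_refl rel_edge_range f)
  finally show ?thesis by (simp add: fminus_self)
qed

lemma gap_mul_path_el: assumes "walk w \<tau> z" "\<tau> \<noteq> []" shows "fmul (gap w) (path_el w \<tau>) \<approx> (fzero :: ('v,'e,'k::field) el)"
proof -
  obtain f \<tau>' where t: "\<tau> = f # \<tau>'" using assms(2) by (cases \<tau>) auto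
  have f: "f \<in> E1" "s f = w" "walk (r f) \<tau>' z" using assms(1) t by auto
  have "fmul (gap w) (path_el w \<tau>) = (fmul (fmul (gap w) (edge f)) (path_el (r f) \<tau>') :: ('v,'e,'k) el)"
    using t by (simp add: fmul_assoc)
  thus ?thesis using eqv_zero_rmul[OF gap_mul_edge[OF f(1,2)] FA_path_el[OF f(3)]] by simp
qed

lemma vtx_mul_gap: "fmul (vtx w) (gap w) \<approx> (gap w :: ('v,'e,'k::field) el)"
proof -
  have "fmul (vtx w) (gap w) = (fminus (fmul (vtx w) (vtx w)) (fsum (out_edges w) (\<lambda>e. fmul (fmul (vtx w) (edge e)) (ghost e))) :: ('v,'e,'k) el)"
    unfolding gap_def by (simp add: fmul_fminus_right fmul_fsum_right fmul_assoc)
  also have "\<dots> \<approx> gap w"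
    unfolding gap_def using finite_out_edges regular_in_E0
    by (intro eqv_minus eqv_fsum vtx_idem eqv_rmul FA_ghost) (auto simp: out_edges_def intro: rel_src_edge[of _, simplified])
  finally show ?thesis .
qed

lemma gap_mul_vtx: "fmul (gap w) (vtx w) \<approx> (gap w :: ('v,'e,'k::field) el)"
proof -
  have "fmul (gap w) (vtx w) = (fminus (fmul (vtx w) (vtx w)) (fsum (out_edges w) (\<lambda>e. fmul (edge e) (fmul (ghost e) (vtx w)))) :: ('v,'e,'k) el)"
    unfolding gap_def by (simp add: fmul_fminus_left fmul_fsum_left fmul_assoc)
  also have "\<dots> \<approx> gap w"
    unfolding gap_def using finite_out_edges regular_in_E0
    by (intro eqv_minus eqv_fsum vtx_idem eqv_lmul FA_edge) (auto simp: out_edges_def intro: rel_ghost_src[of _, simplified])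
  finally show ?thesis .
qed

lemma gap_idem: "fmul (gap w) (gap w) \<approx> (gap w :: ('v,'e,'k::field) el)"
proof -
  have "fmul (gap w) (gap w) = (fminus (fmul (gap w) (vtx w)) (fsum (out_edges w) (\<lambda>e. fmul (fmul (gap w) (edge e)) (ghost e))) :: ('v,'e,'k) el)"
    unfolding gap_def[of w] by (simp add: fmul_fminus_right fmul_fsum_right fmul_assoc gap_def)
  also have "\<dots> \<approx> fminus (gap w) (fsum (out_edges w) (\<lambda>e. fzero))"
    using finite_out_edges by (intro eqv_minus eqv_fsum gap_mul_vtx eqv_zero_rmul gap_mul_edge FA_ghost) (auto simp: out_edges_def)
  finally show ?thesis by (simp add: fsum_fzero fminus_fzero)
qed

end

lemma gap_eqv_zero:
  assumes "w \<in> X" shows "gap w \<approx> fzero"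
proof -
  have "gap w \<approx> fminus (fsum (out_edges w) (\<lambda>e. fmul (edge e) (ghost e))) (fsum (out_edges w) (\<lambda>e. fmul (edge e) (ghost e)))"
    unfolding gap_def out_edges_def by (rule eqv_minus[OF rel_CK[OF assms] eqv_refl])
  thus ?thesis by (simp add: fminus_self)
qed

section \<open>Condition (L)\<close>

lemma walk_cycle: "walk w p w \<Longrightarrow> p \<noteq> [] \<Longrightarrow> is_cycle E1 r s p \<longleftrightarrow> distinct (map s p)"
  unfolding is_cycle_def using walk_E1 walk_consec walk_hd walk_last by metis

lemma closed_walk_has_cycle: "walk w p w \<Longrightarrow> p \<noteq> [] \<Longrightarrow> \<exists>c. walk w c w \<and> c \<noteq> [] \<and> distinct (map s c)"
proof (induction "length p" arbitrary: p rule: less_induct)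
  case less
  show ?case
  proof (cases "distinct (map s p)")
    case True thus ?thesis using less.prems by blast
  next
    case False
    then obtain xs ys zs y where d: "map s p = xs@[y]@ys@[y]@zs" using not_distinct_decomp by blast
    then obtain a p1 where p1: "p = a @ p1" "map s a = xs" "map s p1 = [y]@ys@[y]@zs"
      by (auto simp: map_eq_append_conv)
    then obtain e1 p2 where p2: "p1 = e1 # p2" "s e1 = y" "map s p2 = ys@[y]@zs"
      by (auto simp: map_eq_Cons_conv)
    then obtain b p3 where p3: "p2 = b @ p3" "map s p3 = [y]@zs"
      by (auto simp: map_eq_append_conv)
    then obtain e2 d where p4: "p3 = e2 # d" "s e2 = y"
      by (auto simp: map_eq_Cons_conv)
    have eq: "p = a @ e1 # b @ e2 # d" using p1 p2 p3 p4 by simp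
    from less.prems(1) obtain m where m: "walk w a m" "walk m (e1 # b @ e2 # d) w"
      unfolding eq by (auto simp: walk_append)
    hence "m = y" using p2 by simp
    from m(2) obtain m' where "walk m (e1#b) m'" "walk m' (e2#d) w" by (auto simp: walk_append)
    hence "m' = y" using p4 by simp
    have w': "walk w (a @ e2 # d) w" using m \<open>m = y\<close> \<open>m' = y\<close> \<open>walk m' (e2#d) w\<close>
      by (auto simp: walk_append)
    have "length (a @ e2 # d) < length p" unfolding eq by simp
    from less.hyps[OF this w'] show ?thesis by simp
  qed
qed

lemma walk_concat_replicate: "walk w c w \<Longrightarrow> w \<in> E0 \<Longrightarrow> walk w (concat (replicate M c)) w"
  by (induction M) (auto simp: walk_append)

text \<open>The walk \<open>lam\<close> runs \<open>M\<close> times around the cycle \<open>c\<close> and then leaves it through the exit \<open>e\<close>.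
  If it were a prefix of \<open>\<tau> @ lam\<close>, it would be \<open>|\<tau>|\<close>-periodic; since \<open>c\<close> passes through \<open>w\<close>
  only at multiples of \<open>|c|\<close>, so would be \<open>|\<tau>|\<close>, and comparing the last edge of \<open>lam\<close> with the
  one a period earlier gives \<open>e = c ! j\<close>.\<close>
lemma exit_walk_not_overlapping:
  assumes c: "walk w c w" "c \<noteq> []" "distinct (map s c)"
    and e: "e \<in> E1" "j < length c" "s e = s (c ! j)" "e \<noteq> c ! j"
    and \<tau>: "walk w \<tau> w" "\<tau> \<noteq> []" "length \<tau> < M * length c"
  defines "lam \<equiv> concat (replicate M c) @ take j c @ [e]"
  shows "take (length lam) (\<tau> @ lam) \<noteq> lam"
proof
  assume overlap: "take (length lam) (\<tau> @ lam) = lam"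
  define n t where "n = length c" and "t = length \<tau>"
  define L where "L = M * n + j"
  have lenL: "length lam = Suc L"
    using e(2) by (simp add: lam_def L_def n_def length_concat sum_list_replicate min_def)
  have tL: "t \<le> L" "0 < t" using \<tau>(2,3) by (simp_all add: t_def L_def n_def)
  have idx: "lam ! p = c ! (p mod n)" if "p < L" for p
    using that e(2) nth_concat_replicate[of j c p M]
    by (simp add: lam_def L_def n_def nth_append length_concat sum_list_replicate min_def
        flip: append_assoc)
  have last: "lam ! L = e"
    using e(2) by (simp add: lam_def L_def n_def nth_append length_concat sum_list_replicate min_def)
  have c0: "s (c ! 0) = w" using walk_hd[OF c(1,2)] c(2) by (simp add: hd_conv_nth)
  have lam: "walk w lam (r e)"
    using walk_concat_replicate[OF c(1)] walk_take[OF c(1) e(2)] e(1,3) r_in_E0 walk_E0[OF c(1)]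
    by (auto simp: lam_def walk_append)
  have "walk w (take t lam) (s (lam ! t))" using walk_take[OF lam] tL lenL by simp
  hence st: "s (lam ! t) = w"
    using take_append_prefix[OF overlap] tL lenL \<tau>(1) walk_det by (fastforce simp: t_def)
  have "t mod n = 0"
  proof (cases "t < L")
    case True
    hence "s (c ! (t mod n)) = s (c ! 0)" using st idx c0 by simp
    thus ?thesis using c(2,3) nth_eq_iff_index_eq[of "map s c"] by (simp add: n_def)
  next
    case False
    hence "t = L" using tL by simp
    hence "s (c ! j) = s (c ! 0)" using st last e(3) c0 by simp
    hence "j = 0" using c(2,3) e(2) nth_eq_iff_index_eq[of "map s c"] by simp
    thus ?thesis using \<open>t = L\<close> by (simp add: L_def)
  qed
  then obtain k where k: "t = k * n" by (metis mod_eq_0_iff_dvd dvd_def mult.commute)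
  have "k \<le> M"
  proof (rule ccontr)
    assume "\<not> k \<le> M"
    hence "Suc M * n \<le> k * n" by (intro mult_le_mono1) simp
    thus False using tL k e(2) by (simp add: L_def n_def)
  qed
  hence "L - t = (M - k) * n + j" using k by (simp add: L_def diff_mult_distrib)
  hence "(L - t) mod n = j" using e(2) by (simp add: n_def)
  hence "lam ! (L - t) = c ! j" using idx[of "L - t"] tL by simp
  moreover have "lam ! L = lam ! (L - t)"
    using take_append_shift[OF overlap] tL lenL by (simp add: t_def)
  ultimately show False using last e(4) by simp
qed

lemma exit_walk_exists:
  assumes L: "condition_L E1 r s" and w: "w \<in> E0" and fin: "finite T"
    and T: "\<And>\<tau>. \<tau> \<in> T \<Longrightarrow> walk w \<tau> w \<and> \<tau> \<noteq> []"
  shows "\<exists>lam z. walk w lam z \<and> (\<forall>\<tau>\<in>T. take (length lam) (\<tau> @ lam) \<noteq> lam)"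
proof (cases "T = {}")
  case True
  thus ?thesis using w by (intro exI[of _ "[]"]) auto
next
  case False
  then obtain \<tau>0 where "\<tau>0 \<in> T" by blast
  then obtain c where c: "walk w c w" "c \<noteq> []" "distinct (map s c)"
    using closed_walk_has_cycle T by blast
  hence "is_cycle E1 r s c" using walk_cycle by blast
  then obtain e where "is_exit E1 s c e" using L unfolding condition_L_def by blast
  then obtain j where e: "e \<in> E1" "j < length c" "s e = s (c ! j)" "e \<noteq> c ! j"
    unfolding is_exit_def by blast
  define M where "M = Suc (Max (length ` T))"
  define lam where "lam = concat (replicate M c) @ take j c @ [e]"
  have "walk w lam (r e)"
    using walk_concat_replicate[OF c(1) w] walk_take[OF c(1) e(2)] e(1,3) r_in_E0
    by (auto simp: lam_def walk_append)
  moreover have "length \<tau> < M * length c" if "\<tau> \<in> T" for \<tau>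
  proof -
    have "length \<tau> < M" using fin that by (simp add: M_def le_imp_less_Suc)
    also have "M \<le> M * length c" using c(2) by (simp add: Suc_le_eq)
    finally show ?thesis .
  qed
  ultimately show ?thesis
    using exit_walk_not_overlapping[OF c e] T unfolding lam_def by blast
qed

lemma ghost_el_mul_path_comb:
  assumes fin: "finite S" and W: "\<And>\<mu>. \<mu> \<in> S \<Longrightarrow> walk u \<mu> w" and m1: "\<mu>1 \<in> S"
    and mn: "\<And>\<mu>. \<mu> \<in> S \<Longrightarrow> length \<mu>1 \<le> length \<mu>"
  shows "fmul (ghost_el u \<mu>1) (fsum S (\<lambda>\<mu>. fsmul (c \<mu>) (path_el u \<mu>))) \<approx>
         (fsum {\<tau>. \<mu>1@\<tau> \<in> S} (\<lambda>\<tau>. fsmul (c (\<mu>1@\<tau>)) (path_el w \<tau>)) :: ('v,'e,'k::field) el)"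
proof -
  have "fmul (ghost_el u \<mu>1) (fsum S (\<lambda>\<mu>. fsmul (c \<mu>) (path_el u \<mu>))) = (fsum S (\<lambda>\<mu>. fsmul (c \<mu>) (fmul (ghost_el u \<mu>1) (path_el u \<mu>))) :: ('v,'e,'k) el)"
    by (simp add: fmul_fsum_right fmul_fsmul_right)
  also have "\<dots> \<approx> fsum S (\<lambda>\<mu>. fsmul (c \<mu>) (ghost_path_prod w w \<mu>1 \<mu>))"
    using fin W m1 by (intro eqv_fsum eqv_smul ghost_el_path_el) auto
  also have "\<dots> = fsum S (\<lambda>\<mu>. if take (length \<mu>1) \<mu> = \<mu>1 then fsmul (c \<mu>) (path_el w (drop (length \<mu>1) \<mu>)) else fzero)"
  proof (rule fsum_cong)
    fix \<mu> assume "\<mu> \<in> S"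
    hence le: "length \<mu>1 \<le> length \<mu>" by (rule mn)
    show "fsmul (c \<mu>) (ghost_path_prod w w \<mu>1 \<mu>) = (if take (length \<mu>1) \<mu> = \<mu>1 then fsmul (c \<mu>) (path_el w (drop (length \<mu>1) \<mu>)) else fzero)"
    proof (cases "take (length \<mu>1) \<mu> = \<mu>1")
      case True thus ?thesis by (simp add: ghost_path_prod_def)
    next
      case False
      have "take (length \<mu>) \<mu>1 \<noteq> \<mu>"
      proof
        assume "take (length \<mu>) \<mu>1 = \<mu>"
        hence "\<mu>1 = \<mu>" using le by simp
        thus False using False by simp
      qed
      thus ?thesis using False by (simp add: ghost_path_prod_def fsmul_def fzero_def)
    qed
  qed
  also have "\<dots> = fsum {\<mu>\<in>S. take (length \<mu>1) \<mu> = \<mu>1} (\<lambda>\<mu>. fsmul (c \<mu>) (path_el w (drop (length \<mu>1) \<mu>)))"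
    by (rule fsum_filter_if[OF fin])
  also have "\<dots> = fsum {\<tau>. \<mu>1@\<tau> \<in> S} (\<lambda>\<tau>. fsmul (c (\<mu>1@\<tau>)) (path_el w \<tau>))"
    unfolding fsum_def
    by (rule ext, rule sum.reindex_bij_witness[where i="\<lambda>\<tau>. \<mu>1@\<tau>" and j="drop (length \<mu>1)"])
       (auto simp: take_prefix_append_drop)
  finally show ?thesis .
qed

lemma sandwich_path_comb:
  assumes fin: "finite T0" and e0: "[] \<in> T0" and FL: "LL \<in> FA E0 E1" and FR: "RR \<in> FA E0 E1"
    and ne: "\<And>\<tau>. \<tau> \<in> T0 \<Longrightarrow> \<tau> \<noteq> [] \<Longrightarrow> fmul LL (fmul (path_el w \<tau>) RR) \<approx> (fzero :: ('v,'e,'k::field) el)"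
    and em: "fmul LL (fmul (path_el w []) RR) \<approx> (Z :: ('v,'e,'k) el)"
  shows "fmul LL (fmul (fsum T0 (\<lambda>\<tau>. fsmul (d \<tau>) (path_el w \<tau>))) RR) \<approx> fsmul (d []) Z"
proof -
  have "fmul LL (fmul (fsum T0 (\<lambda>\<tau>. fsmul (d \<tau>) (path_el w \<tau>))) RR) = fsum T0 (\<lambda>\<tau>. fsmul (d \<tau>) (fmul LL (fmul (path_el w \<tau>) RR)))"
    by (simp add: fmul_fsum_right fmul_fsum_left fmul_fsmul_right fmul_fsmul_left)
  also have "\<dots> \<approx> fsum T0 (\<lambda>\<tau>. if \<tau> = [] then fsmul (d []) Z else fzero)"
  proof (rule eqv_fsum[OF fin])
    fix \<tau> assume "\<tau> \<in> T0"
    show "fsmul (d \<tau>) (fmul LL (fmul (path_el w \<tau>) RR)) \<approx> (if \<tau> = [] then fsmul (d []) Z else fzero)"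
    proof (cases "\<tau> = []")
      case True thus ?thesis using eqv_smul[OF em] by simp
    next
      case False
      thus ?thesis using eqv_smul[OF ne[OF \<open>\<tau> \<in> T0\<close> False], of "d \<tau>"] by (simp add: fsmul_fzero)
    qed
  qed
  also have "\<dots> = fsmul (d []) Z" by (rule fsum_delta[OF fin e0])
  finally show ?thesis .
qed

lemma shortest_path_coeff_extraction:
  fixes c :: "'e list \<Rightarrow> 'k::field"
  assumes fin: "finite S" and W: "\<And>\<mu>. \<mu> \<in> S \<Longrightarrow> walk u \<mu> w" and nz: "\<exists>\<mu>\<in>S. c \<mu> \<noteq> 0"
  obtains \<mu>1 T where "walk u \<mu>1 w" "c \<mu>1 \<noteq> 0" "finite T" "\<And>\<tau>. \<tau> \<in> T \<Longrightarrow> walk w \<tau> w \<and> \<tau> \<noteq> []"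
    "\<And>L R Z. L \<in> FA E0 E1 \<Longrightarrow> R \<in> FA E0 E1
       \<Longrightarrow> (\<And>\<tau>. \<tau> \<in> T \<Longrightarrow> fmul L (fmul (path_el w \<tau>) R) \<approx> fzero)
       \<Longrightarrow> fmul L (fmul (vtx w) R) \<approx> (Z :: ('v,'e,'k) el)
       \<Longrightarrow> fmul L (fmul (fmul (ghost_el u \<mu>1) (fsum S (\<lambda>\<mu>. fsmul (c \<mu>) (path_el u \<mu>)))) R)
           \<approx> fsmul (c \<mu>1) Z"
proof -
  define S' where "S' = {\<mu>\<in>S. c \<mu> \<noteq> 0}"
  have fin': "finite S'" and W': "\<And>\<mu>. \<mu> \<in> S' \<Longrightarrow> walk u \<mu> w"
    using fin W by (auto simp: S'_def)
  obtain \<mu>0 where "\<mu>0 \<in> S'" using nz by (auto simp: S'_def)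
  then obtain \<mu>1 where \<mu>1: "\<mu>1 \<in> S'" and shortest: "\<And>\<mu>. \<mu> \<in> S' \<Longrightarrow> length \<mu>1 \<le> length \<mu>"
    using ex_has_least_nat[of "\<lambda>\<mu>. \<mu> \<in> S'" \<mu>0 length] by blast
  define T0 where "T0 = {\<tau>. \<mu>1 @ \<tau> \<in> S'}"
  have "T0 \<subseteq> drop (length \<mu>1) ` S'"
  proof
    fix \<tau> assume "\<tau> \<in> T0"
    thus "\<tau> \<in> drop (length \<mu>1) ` S'" by (intro image_eqI[where x="\<mu>1 @ \<tau>"]) (auto simp: T0_def)
  qed
  hence finT0: "finite T0" using fin' finite_subset by blast
  have closed: "walk w \<tau> w" if "\<tau> \<in> T0" for \<tau>
    using that W'[of "\<mu>1 @ \<tau>"] W'[OF \<mu>1] walk_suffix by (auto simp: T0_def)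
  have y: "fsum S (\<lambda>\<mu>. fsmul (c \<mu>) (path_el u \<mu>)) = fsum S' (\<lambda>\<mu>. fsmul (c \<mu>) (path_el u \<mu>))"
    unfolding S'_def by (rule fsum_smul_nonzero_coeffs[OF fin])
  show thesis
  proof
    show "walk u \<mu>1 w" "c \<mu>1 \<noteq> 0" using W' \<mu>1 by (auto simp: S'_def)
    show "finite (T0 - {[]})" using finT0 by simp
    show "walk w \<tau> w \<and> \<tau> \<noteq> []" if "\<tau> \<in> T0 - {[]}" for \<tau> using that closed by blast
  next
    fix L R Z :: "('v,'e,'k) el" assume L: "L \<in> FA E0 E1" and R: "R \<in> FA E0 E1"
      and kill: "\<And>\<tau>. \<tau> \<in> T0 - {[]} \<Longrightarrow> fmul L (fmul (path_el w \<tau>) R) \<approx> fzero"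
      and Z: "fmul L (fmul (vtx w) R) \<approx> Z"
    have "fmul (ghost_el u \<mu>1) (fsum S (\<lambda>\<mu>. fsmul (c \<mu>) (path_el u \<mu>)))
        \<approx> fsum T0 (\<lambda>\<tau>. fsmul (c (\<mu>1 @ \<tau>)) (path_el w \<tau>))"
      unfolding y T0_def using fin' W' \<mu>1 shortest by (rule ghost_el_mul_path_comb)
    hence "fmul L (fmul (fmul (ghost_el u \<mu>1) (fsum S (\<lambda>\<mu>. fsmul (c \<mu>) (path_el u \<mu>)))) R)
        \<approx> fmul L (fmul (fsum T0 (\<lambda>\<tau>. fsmul (c (\<mu>1 @ \<tau>)) (path_el w \<tau>))) R)"
      using L R by (intro eqv_lmul eqv_rmul)
    also have "\<dots> \<approx> fsmul (c (\<mu>1 @ [])) Z"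
      using finT0 L R kill Z \<mu>1 by (intro sandwich_path_comb) (auto simp: T0_def)
    finally show "fmul L (fmul (fmul (ghost_el u \<mu>1) (fsum S (\<lambda>\<mu>. fsmul (c \<mu>) (path_el u \<mu>)))) R)
        \<approx> fsmul (c \<mu>1) Z" by simp
  qed
qed

definition ghost_part :: "'v \<times> 'e list \<times> 'v \<times> 'e list \<Rightarrow> 'e list" where "ghost_part t = snd (snd (snd t))"

definition path_part :: "'v \<times> 'e list \<times> 'v \<times> 'e list \<Rightarrow> 'e list" where "path_part t = fst (snd t)"

definition block :: "'v \<Rightarrow> 'v \<Rightarrow> nat \<Rightarrow> ('v \<times> 'e list \<times> 'v \<times> 'e list) set \<Rightarrow> bool" where
  "block u w m S \<longleftrightarrow> finite S \<and> (\<forall>t\<in>S. admissible t \<and> fst t = u \<and> fst (snd (snd t)) = w \<and> length (ghost_part t) \<le> m)"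

lemma blockD: "block u w m S \<Longrightarrow> t \<in> S \<Longrightarrow> t = (u, path_part t, w, ghost_part t) \<and> admissible t \<and> length (ghost_part t) \<le> m"
  unfolding block_def ghost_part_def path_part_def by (cases t) auto

lemma block_finite: "block u w m S \<Longrightarrow> finite S" by (simp add: block_def)

lemma block_subset: "block u w m S \<Longrightarrow> S' \<subseteq> S \<Longrightarrow> block u w m S'"
  unfolding block_def by (auto intro: finite_subset)

lemma FA_block_comb: "block u w m S \<Longrightarrow> comb S c \<in> FA E0 E1"
  by (intro FA_comb) (auto simp: block_def)

lemma block_obtain: assumes "block u w m S" "t \<in> S" obtains \<mu> \<nu> where "t = (u, \<mu>, w, \<nu>)" "admissible (u, \<mu>, w, \<nu>)"
  using blockD[OF assms] by (metis)

lemma block_ghost_hd_out_edge: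
  assumes "block u w m S" "t \<in> S" "ghost_part t \<noteq> []"
  shows "hd (ghost_part t) \<in> out_edges w"
proof -
  obtain \<mu> \<nu> where t: "t = (u, \<mu>, w, \<nu>)" "admissible (u, \<mu>, w, \<nu>)" using block_obtain[OF assms(1,2)] .
  then obtain z where "walk w \<nu> z" by auto
  moreover have "\<nu> \<noteq> []" using assms(3) t by (simp add: ghost_part_def)
  ultimately show ?thesis using t by (cases \<nu>) (auto simp: ghost_part_def out_edges_def)
qed

lemma block_comb_mul_vtx:
  assumes B: "block u w m S"
  shows "fmul (comb S c) (vtx w) \<approx> (comb S c :: ('v,'e,'k::field) el)"
proof -
  have "fmul (comb S c) (vtx w) \<approx> (fsum S (\<lambda>t. fsmul (c t) (pg_el t)) :: ('v,'e,'k) el)"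
  proof (rule comb_mul_eqv[OF block_finite[OF B]])
    fix t assume "t \<in> S"
    then obtain \<mu> \<nu> where "t = (u, \<mu>, w, \<nu>)" "admissible (u, \<mu>, w, \<nu>)" by (rule block_obtain[OF B])
    thus "fmul (pg_el t) (vtx w) \<approx> pg_el t" using pg_mul_vtx by simp
  qed
  thus ?thesis by (simp add: comb_def)
qed

lemma block_comb_mul_other_head:
  assumes B: "block u w m S" and e: "e \<in> E1"
    and other: "\<And>t. t \<in> S \<Longrightarrow> ghost_part t \<noteq> [] \<and> hd (ghost_part t) \<noteq> e"
  shows "fmul (comb S c) (edge e) \<approx> (fzero :: ('v,'e,'k::field) el)"
proof -
  have "fmul (comb S c) (edge e) \<approx> fsum S (\<lambda>t. fsmul (c t) (fzero :: ('v,'e,'k) el))"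
  proof (rule comb_mul_eqv[OF block_finite[OF B]])
    fix t assume t: "t \<in> S"
    then obtain \<mu> \<nu> where tt: "t = (u, \<mu>, w, \<nu>)" "admissible (u, \<mu>, w, \<nu>)" by (rule block_obtain[OF B])
    moreover obtain f n where "\<nu> = f # n" "f \<noteq> e"
      using other[OF t] tt by (cases \<nu>) (auto simp: ghost_part_def)
    ultimately show "fmul (pg_el t) (edge e) \<approx> fzero" using pg_mul_edge_other[of u \<mu> w f n e] e by simp
  qed
  thus ?thesis by (simp add: fsmul_fzero fsum_fzero)
qed

lemma block_comb_mul_fresh_edge:
  assumes B: "block u w m S" and e: "e \<in> E1"
    and fresh: "\<And>t. t \<in> S \<Longrightarrow> ghost_part t \<noteq> [] \<Longrightarrow> hd (ghost_part t) \<noteq> e"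
  shows "fmul (comb S c) (edge e) \<approx> (fmul (comb {t\<in>S. ghost_part t = []} c) (edge e) :: ('v,'e,'k::field) el)"
proof -
  let ?S0 = "{t\<in>S. ghost_part t = []}" and ?S1 = "{t\<in>S. \<not> ghost_part t = []}"
  have "fmul (comb S c) (edge e) = fadd (fmul (comb ?S0 c) (edge e)) (fmul (comb ?S1 c) (edge e))"
    by (subst comb_split[OF block_finite[OF B], of _ "\<lambda>t. ghost_part t = []"]) (simp add: fmul_fadd_left)
  also have "\<dots> \<approx> fadd (fmul (comb ?S0 c) (edge e)) fzero"
    using fresh by (intro eqv_add eqv_refl block_comb_mul_other_head[OF block_subset[OF B] e]) auto
  finally show ?thesis by (simp add: fadd_fzero)
qed

lemma block_comb_head_part:
  assumes B: "block u w m S" and e: "e \<in> E1" and xz: "fmul (comb S c) (edge e) \<approx> fzero"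
  shows "comb {t\<in>S. ghost_part t \<noteq> [] \<and> hd (ghost_part t) = e} c
       \<approx> (fsmul (-1) (fmul (comb {t\<in>S. ghost_part t = []} c) (fmul (edge e) (ghost e))) :: ('v,'e,'k::field) el)"
proof -
  let ?Se = "{t\<in>S. ghost_part t \<noteq> [] \<and> hd (ghost_part t) = e}"
  let ?S' = "{t\<in>S. \<not> (ghost_part t \<noteq> [] \<and> hd (ghost_part t) = e)}"
  let ?S0 = "{t\<in>S. ghost_part t = []}"
  have Se: "block u w m ?Se" and S': "block u w m ?S'" using block_subset[OF B] by auto
  have "fmul (comb ?S' c) (edge e) \<approx> (fmul (comb {t\<in>?S'. ghost_part t = []} c) (edge e) :: ('v,'e,'k) el)"
    by (rule block_comb_mul_fresh_edge[OF S' e]) auto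
  moreover have "{t\<in>?S'. ghost_part t = []} = ?S0" by auto
  ultimately have S'_e: "fmul (comb ?S' c) (edge e) \<approx> (fmul (comb ?S0 c) (edge e) :: ('v,'e,'k) el)" by simp
  have "fadd (fmul (comb ?Se c) (edge e)) (fmul (comb ?S' c) (edge e)) = fmul (comb S c) (edge e)"
    by (subst comb_split[OF block_finite[OF B], of c "\<lambda>t. ghost_part t \<noteq> [] \<and> hd (ghost_part t) = e"])
       (simp add: fmul_fadd_left)
  hence "fmul (comb ?Se c) (edge e) \<approx> fsmul (-1) (fmul (comb ?S' c) (edge e))"
    using xz by (intro eqv_neg_of_sum_zero) simp
  also have "\<dots> \<approx> fsmul (-1) (fmul (comb ?S0 c) (edge e))" by (rule eqv_smul[OF S'_e])
  finally have Se_e: "fmul (comb ?Se c) (edge e) \<approx> fsmul (-1) (fmul (comb ?S0 c) (edge e))" .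
  have "fmul (comb ?Se c) (fmul (edge e) (ghost e)) \<approx> (fsum ?Se (\<lambda>t. fsmul (c t) (pg_el t)) :: ('v,'e,'k) el)"
  proof (rule comb_mul_eqv[OF block_finite[OF Se]])
    fix t assume t: "t \<in> ?Se"
    then obtain \<mu> \<nu> where tt: "t = (u, \<mu>, w, \<nu>)" "admissible (u, \<mu>, w, \<nu>)" by (rule block_obtain[OF Se])
    moreover obtain n where "\<nu> = e # n" using t tt by (cases \<nu>) (auto simp: ghost_part_def)
    ultimately show "fmul (pg_el t) (fmul (edge e) (ghost e)) \<approx> pg_el t"
      using pg_eqv_edge_ghost[of u \<mu> w e n] eqv_sym by (simp add: fmul_assoc)
  qed
  hence "comb ?Se c \<approx> fmul (fmul (comb ?Se c) (edge e)) (ghost e)"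
    by (simp add: comb_def fmul_assoc eqv_sym)
  also have "\<dots> \<approx> fmul (fsmul (-1) (fmul (comb ?S0 c) (edge e))) (ghost e)"
    by (rule eqv_rmul[OF FA_ghost[OF e] Se_e])
  also have "\<dots> = fsmul (-1) (fmul (comb ?S0 c) (fmul (edge e) (ghost e)))"
    by (simp add: fmul_fsmul_left fmul_assoc)
  finally show ?thesis .
qed

lemma block_comb_eqv_gap_factor:
  assumes B: "block u w m S" and finF: "finite F" and FF: "F \<subseteq> out_edges w"
    and hdF: "\<And>t. t \<in> S \<Longrightarrow> ghost_part t \<noteq> [] \<Longrightarrow> hd (ghost_part t) \<in> F"
    and xz: "\<And>e. e \<in> F \<Longrightarrow> fmul (comb S c) (edge e) \<approx> fzero"
  shows "comb S c \<approx> (fmul (comb {t\<in>S. ghost_part t = []} c)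
                        (fminus (vtx w) (fsum F (\<lambda>e. fmul (edge e) (ghost e)))) :: ('v,'e,'k::field) el)"
proof -
  let ?S0 = "{t\<in>S. ghost_part t = []}" and ?S1 = "{t\<in>S. ghost_part t \<noteq> []}"
  let ?x0 = "comb ?S0 c"
  have fin: "finite S" using block_finite[OF B] .
  have "comb ?S1 c = fsum F (\<lambda>e. comb {t\<in>S. ghost_part t \<noteq> [] \<and> hd (ghost_part t) = e} c)"
  proof (rule ext)
    fix x
    have S1: "finite ?S1" using fin by simp
    have "(\<lambda>t. hd (ghost_part t)) ` ?S1 \<subseteq> F" using hdF by auto
    hence "(\<Sum>t\<in>?S1. fsmul (c t) (pg_el t) x)
        = (\<Sum>e\<in>F. \<Sum>t\<in>{t\<in>?S1. hd (ghost_part t) = e}. fsmul (c t) (pg_el t) x)"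
      by (rule sum.group[OF S1 finF, symmetric])
    thus "comb ?S1 c x = fsum F (\<lambda>e. comb {t\<in>S. ghost_part t \<noteq> [] \<and> hd (ghost_part t) = e} c) x"
      by (simp add: comb_def fsum_def conj_assoc)
  qed
  hence "comb S c = fadd ?x0 (fsum F (\<lambda>e. comb {t\<in>S. ghost_part t \<noteq> [] \<and> hd (ghost_part t) = e} c))"
    using comb_split[OF fin, of c "\<lambda>t. ghost_part t = []"] by simp
  also have "\<dots> \<approx> fadd ?x0 (fsum F (\<lambda>e. fsmul (-1) (fmul ?x0 (fmul (edge e) (ghost e)))))"
    using FF xz by (intro eqv_add eqv_refl eqv_fsum[OF finF] block_comb_head_part[OF B])
      (auto simp: out_edges_def)
  also have "\<dots> = fminus ?x0 (fmul ?x0 (fsum F (\<lambda>e. fmul (edge e) (ghost e))))"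
    by (simp only: fmul_fsum_right) (simp add: fdefs sum_negf)
  also have "\<dots> \<approx> fminus (fmul ?x0 (vtx w)) (fmul ?x0 (fsum F (\<lambda>e. fmul (edge e) (ghost e))))"
    using block_subset[OF B, of ?S0] by (intro eqv_minus eqv_refl eqv_sym[OF block_comb_mul_vtx]) auto
  also have "\<dots> = fmul ?x0 (fminus (vtx w) (fsum F (\<lambda>e. fmul (edge e) (ghost e))))"
    by (simp add: fmul_fminus_right)
  finally show ?thesis .
qed

definition edge_shift :: "'e \<Rightarrow> 'v \<times> 'e list \<times> 'v \<times> 'e list \<Rightarrow> 'v \<times> 'e list \<times> 'v \<times> 'e list" where
  "edge_shift e t = (fst t, if ghost_part t = [] then path_part t @ [e] else path_part t, r e, tl (ghost_part t))"

lemma pg_mul_edge_shift: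
  assumes "admissible (u, \<mu>, w, \<nu>)" "e \<in> E1" "s e = w" "\<nu> = [] \<or> hd \<nu> = e"
  shows "fmul (pg_el (u, \<mu>, w, \<nu>)) (edge e) \<approx> (pg_el (edge_shift e (u, \<mu>, w, \<nu>)) :: ('v,'e,'k::field) el)"
  using assms pg_mul_edge_Nil[of u \<mu> w e] pg_mul_edge_Cons[of u \<mu> w e]
  by (cases \<nu>) (auto simp: edge_shift_def ghost_part_def path_part_def)

lemma block_edge_shift:
  assumes B: "block u w m S" and e: "e \<in> E1" "s e = w"
  shows "block u (r e) (m - 1) (edge_shift e ` {t\<in>S. ghost_part t = [] \<or> hd (ghost_part t) = e})"
  unfolding block_def
proof (rule conjI[OF _ ballI])
  show "finite (edge_shift e ` {t\<in>S. ghost_part t = [] \<or> hd (ghost_part t) = e})"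
    using block_finite[OF B] by simp
next
  fix t' assume "t' \<in> edge_shift e ` {t\<in>S. ghost_part t = [] \<or> hd (ghost_part t) = e}"
  then obtain t where tS: "t \<in> S" and hd: "ghost_part t = [] \<or> hd (ghost_part t) = e"
    and t': "t' = edge_shift e t" by blast
  have t: "t = (u, path_part t, w, ghost_part t)" "admissible t" "length (ghost_part t) \<le> m"
    using blockD[OF B tS] by auto
  obtain z where m: "walk u (path_part t) z" and n: "walk w (ghost_part t) z"
    using t(1,2) by (metis admissible.simps)
  have u: "fst t = u" using B tS by (simp add: block_def)
  show "admissible t' \<and> fst t' = u \<and> fst (snd (snd t')) = r e \<and> length (ghost_part t') \<le> m - 1"
  proof (cases "ghost_part t")
    case Nil
    thus ?thesis using n t' m e r_in_E0 u by (auto simp: edge_shift_def ghost_part_def walk_append)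
  next
    case (Cons f n')
    thus ?thesis using hd t' m n t(3) u by (auto simp: edge_shift_def ghost_part_def)
  qed
qed

lemma block_comb_mul_edge:
  assumes B: "block u w m S" and e: "e \<in> E1" "s e = w"
  shows "\<exists>S' c'. block u (r e) (m - 1) S' \<and> fmul (comb S c) (edge e) \<approx> (comb S' c' :: ('v,'e,'k::field) el)"
proof -
  let ?D = "{t\<in>S. ghost_part t = [] \<or> hd (ghost_part t) = e}"
  have fin: "finite S" using block_finite[OF B] .
  have "fmul (comb S c) (edge e)
      \<approx> (fsum S (\<lambda>t. fsmul (c t) (if t \<in> ?D then pg_el (edge_shift e t) else fzero)) :: ('v,'e,'k) el)"
  proof (rule comb_mul_eqv[OF fin])
    fix t assume t: "t \<in> S"
    then obtain \<mu> \<nu> where tt: "t = (u, \<mu>, w, \<nu>)" "admissible (u, \<mu>, w, \<nu>)" by (rule block_obtain[OF B])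
    show "fmul (pg_el t) (edge e) \<approx> (if t \<in> ?D then pg_el (edge_shift e t) else fzero)"
    proof (cases "t \<in> ?D")
      case True
      thus ?thesis using pg_mul_edge_shift[OF tt(2) e] tt by (simp add: ghost_part_def)
    next
      case False
      then obtain f n where "\<nu> = f # n" "f \<noteq> e" using t tt by (cases \<nu>) (auto simp: ghost_part_def)
      hence "fmul (pg_el t) (edge e) \<approx> fzero" using pg_mul_edge_other[of u \<mu> w f n e] tt e by simp
      thus ?thesis using False by (simp only: if_False)
    qed
  qed
  also have "\<dots> = fsum ?D (\<lambda>t. fsmul (c t) (pg_el (edge_shift e t)))"
    by (subst fsum_filter_if[OF fin, symmetric]) (rule fsum_cong, simp add: fsmul_fzero)
  also have "\<dots> = comb (edge_shift e ` ?D) (\<lambda>t'. \<Sum>t\<in>{t\<in>?D. edge_shift e t = t'}. c t)"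
    unfolding comb_def using fin by (intro fsum_smul_regroup) simp
  finally show ?thesis using block_edge_shift[OF B e] by blast
qed
lemma block_comb_no_ghost:
  assumes B: "block u w m S0" and N: "\<forall>t\<in>S0. ghost_part t = []"
  shows "comb S0 c \<approx> (fsum (path_part ` S0) (\<lambda>\<mu>. fsmul (c (u, \<mu>, w, [])) (path_el u \<mu>)) :: ('v,'e,'k::field) el)"
    and "\<forall>\<mu>\<in>path_part ` S0. walk u \<mu> w"
proof -
  have tt: "t = (u, path_part t, w, [])" if "t \<in> S0" for t using blockD[OF B that] N that by simp
  have wk: "walk u (path_part t) w" if "t \<in> S0" for t
  proof -
    have "admissible (u, path_part t, w, [])" using blockD[OF B that] tt[OF that] by metis
    thus ?thesis by auto
  qed
  show "\<forall>\<mu>\<in>path_part ` S0. walk u \<mu> w" using wk by auto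
  have "comb S0 c = fsum S0 (\<lambda>t. fsmul (c t) (pg_el t))" by (simp add: comb_def)
  also have "\<dots> \<approx> fsum S0 (\<lambda>t. fsmul (c (u, path_part t, w, [])) (path_el u (path_part t)))"
  proof (rule eqv_fsum[OF block_finite[OF B]])
    fix t assume tS: "t \<in> S0"
    have "pg_el t = fmul (path_el u (path_part t)) (vtx w)" using tt[OF tS] by (metis ghost_el.simps(1) pg_el.simps)
    also have "\<dots> \<approx> path_el u (path_part t)" by (rule path_el_vtx[OF wk[OF tS]])
    finally show "fsmul (c t) (pg_el t) \<approx> fsmul (c (u, path_part t, w, [])) (path_el u (path_part t))"
      using tt[OF tS] by (metis eqv_smul)
  qed
  also have "\<dots> = fsum (path_part ` S0) (\<lambda>\<mu>. fsmul (c (u, \<mu>, w, [])) (path_el u \<mu>))"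
  proof -
    have "inj_on path_part S0" by (metis inj_onI tt)
    thus ?thesis unfolding fsum_def by (simp add: sum.reindex)
  qed
  finally show "comb S0 c \<approx> (fsum (path_part ` S0) (\<lambda>\<mu>. fsmul (c (u, \<mu>, w, [])) (path_el u \<mu>)) :: ('v,'e,'k::field) el)" .
qed

lemma block_comb_no_ghost_zero:
  assumes B: "block u w m S0" and N: "\<forall>t\<in>S0. ghost_part t = []" and Z: "\<forall>\<mu>\<in>path_part ` S0. c (u, \<mu>, w, []) = 0"
  shows "comb S0 c = (fzero :: ('v,'e,'k::field) el)"
proof (rule comb_zero)
  fix t assume tS: "t \<in> S0"
  have "t = (u, path_part t, w, [])" using blockD[OF B tS] N tS by simp
  thus "c t = 0" using Z tS by (metis image_eqI)
qed

lemma path_comb_mul_edge: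
  assumes fin: "finite M" and W: "\<And>\<mu>. \<mu> \<in> M \<Longrightarrow> walk u \<mu> w" and f: "f \<in> E1" "s f = w"
  shows "fmul (fsum M (\<lambda>\<mu>. fsmul (d \<mu>) (path_el u \<mu>))) (edge f)
       \<approx> (fsum ((\<lambda>\<mu>. \<mu> @ [f]) ` M) (\<lambda>\<mu>. fsmul (d (butlast \<mu>)) (path_el u \<mu>)) :: ('v,'e,'k::field) el)"
proof -
  have "fmul (fsum M (\<lambda>\<mu>. fsmul (d \<mu>) (path_el u \<mu>))) (edge f) = fsum M (\<lambda>\<mu>. fsmul (d \<mu>) (fmul (path_el u \<mu>) (edge f)))"
    by (simp add: fmul_fsum_left fmul_fsmul_left)
  also have "\<dots> \<approx> fsum M (\<lambda>\<mu>. fsmul (d \<mu>) (path_el u (\<mu> @ [f])))"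
    using W f by (intro eqv_fsum[OF fin] eqv_smul path_el_mul_edge) auto
  also have "\<dots> = fsum ((\<lambda>\<mu>. \<mu> @ [f]) ` M) (\<lambda>\<mu>. fsmul (d (butlast \<mu>)) (path_el u \<mu>))"
    unfolding fsum_def by (simp add: sum.reindex inj_on_def)
  finally show ?thesis .
qed

definition corner :: "'v \<Rightarrow> 'v \<Rightarrow> ('v \<times> 'e list \<times> 'v \<times> 'e list) set \<Rightarrow> ('v \<times> 'e list \<times> 'v \<times> 'e list) set" where
  "corner u w S = {t\<in>S. fst t = u \<and> fst (snd (snd t)) = w}"

lemma comb_eq_fsum_corners:
  assumes "finite S"
  shows "comb S c = fsum ((\<lambda>t. (fst t, fst (snd (snd t)))) ` S) (\<lambda>p. comb (corner (fst p) (snd p) S) c)"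
  unfolding comb_def fsum_def corner_def
  by (rule ext) (simp add: sum.image_gen[OF assms, of _ "\<lambda>t. (fst t, fst (snd (snd t)))"] prod_eq_iff)

lemma corner_block:
  assumes "finite S" "\<forall>t\<in>S. admissible t"
  shows "block u w (Max ((\<lambda>t. length (ghost_part t)) ` S)) (corner u w S)"
  using assms by (auto simp: block_def corner_def)

lemma vtx_comb_vtx:
  assumes S: "finite S" "\<forall>t\<in>S. admissible t" and uw: "u \<in> E0" "w \<in> E0"
  shows "fmul (vtx u) (fmul (comb S c) (vtx w)) \<approx> (comb (corner u w S) c :: ('v,'e,'k::field) el)"
proof -
  have "fmul (vtx u) (fmul (comb S c) (vtx w)) = fsum S (\<lambda>t. fsmul (c t) (fmul (vtx u) (fmul (pg_el t) (vtx w))))"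
    by (simp add: comb_def fmul_fsum_left fmul_fsum_right fmul_fsmul_left fmul_fsmul_right)
  also have "\<dots> \<approx> fsum S (\<lambda>t. if t \<in> corner u w S then fsmul (c t) (pg_el t) else fzero)"
  proof (rule eqv_fsum[OF S(1)])
    fix t assume t: "t \<in> S"
    have "fsmul (c t) (fmul (vtx u) (fmul (pg_el t) (vtx w)))
        \<approx> fsmul (c t) (if fst t = u \<and> fst (snd (snd t)) = w then pg_el t else fzero)"
      using S(2) t by (intro eqv_smul vtx_pg_vtx uw) auto
    thus "fsmul (c t) (fmul (vtx u) (fmul (pg_el t) (vtx w)))
        \<approx> (if t \<in> corner u w S then fsmul (c t) (pg_el t) else fzero)"
      using t by (auto simp: corner_def fsmul_fzero)
  qed
  also have "\<dots> = comb (corner u w S) c"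
    unfolding comb_def by (simp add: fsum_filter_if[OF S(1)] corner_def)
  finally show ?thesis .
qed
end

section \<open>Injectivity\<close>

locale cohn_rep = cohn_graph E0 E1 r s X
  for E0 :: "'v set" and E1 :: "'e set" and r s :: "'e \<Rightarrow> 'v" and X :: "'v set" +
  fixes \<pi> :: "(('v, 'e) gen list \<Rightarrow> 'k::field) set \<Rightarrow> 'a::ring"
  assumes hom: "cohn_ring_hom E0 E1 r s X \<pi>"
    and L: "condition_L E1 r s"
    and nzV: "\<forall>u \<in> E0. \<pi> (cls E0 E1 r s X (fgen (Vx u))) \<noteq> 0"
    and nzY: "\<forall>v \<in> Reg E0 E1 s - X. \<pi> (cls E0 E1 r s X (gap_elem E1 s v)) \<noteq> 0"
begin

definition phi :: "('v,'e,'k) el \<Rightarrow> 'a" where "phi x = \<pi> (cls E0 E1 r s X x)"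

lemma phi_add: "x \<in> FA E0 E1 \<Longrightarrow> y \<in> FA E0 E1 \<Longrightarrow> phi (fadd x y) = phi x + phi y"
  using hom unfolding cohn_ring_hom_def phi_def by blast

lemma phi_mul: "x \<in> FA E0 E1 \<Longrightarrow> y \<in> FA E0 E1 \<Longrightarrow> phi (fmul x y) = phi x * phi y"
  using hom unfolding cohn_ring_hom_def phi_def by blast

lemma cls_eq: "(a :: ('v,'e,'k) el) \<approx> b \<Longrightarrow> cls E0 E1 r s X a = cls E0 E1 r s X b"
proof -
  assume ab: "a \<approx> b"
  have "y \<approx> a \<longleftrightarrow> y \<approx> b" for y :: "('v,'e,'k) el"
    using ab eqv_trans eqv_sym by blast
  thus ?thesis unfolding cls_def eqv_def by auto
qed

lemma phi_eqv: "(a :: ('v,'e,'k) el) \<approx> b \<Longrightarrow> phi a = phi b"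
  unfolding phi_def using cls_eq by simp

lemma phi_zero: "phi fzero = 0"
proof -
  have "phi (fadd fzero fzero) = phi fzero + phi fzero" using phi_add FA_fzero by blast
  moreover have "fadd fzero fzero = (fzero :: ('v,'e,'k) el)" by (simp add: fdefs)
  ultimately show ?thesis by simp
qed

lemma phi_eqv0: "(a :: ('v,'e,'k) el) \<approx> fzero \<Longrightarrow> phi a = 0"
  using phi_eqv phi_zero by simp

lemma phi_mul_zero_left: "x \<in> FA E0 E1 \<Longrightarrow> y \<in> FA E0 E1 \<Longrightarrow> phi x = 0 \<Longrightarrow> phi (fmul x y) = 0"
  by (simp add: phi_mul)

lemma phi_mul_zero_right: "x \<in> FA E0 E1 \<Longrightarrow> y \<in> FA E0 E1 \<Longrightarrow> phi y = 0 \<Longrightarrow> phi (fmul x y) = 0"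
  by (simp add: phi_mul)

text \<open>\<open>\<pi>\<close> is only assumed additive and multiplicative, not \<open>K\<close>-linear, so a scalar is
  removed by multiplying with \<open>k\<^sup>-\<^sup>1 v\<close> inside the algebra.\<close>
lemma phi_smul_zero:
  assumes "phi (fsmul k a) = 0" "k \<noteq> 0" "a \<in> FA E0 E1" "v \<in> E0" "fmul (vtx v) a \<approx> a"
  shows "phi a = 0"
proof -
  have "fmul (fsmul (inverse k) (vtx v)) (fsmul k a) = fmul (vtx v) a"
    using assms(2) by (simp only: fmul_fsmul_left fmul_fsmul_right) (simp add: fsmul_def mult.assoc[symmetric])
  hence "phi (fmul (vtx v) a) = phi (fsmul (inverse k) (vtx v)) * phi (fsmul k a)"
    using phi_mul[of "fsmul (inverse k) (vtx v)" "fsmul k a"] assms FA_fsmul FA_vtx by metis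
  hence "phi (fmul (vtx v) a) = 0" using assms(1) by simp
  thus ?thesis using phi_eqv[OF assms(5)] by simp
qed

lemma phi_vtx_nonzero: "v \<in> E0 \<Longrightarrow> phi (vtx v) \<noteq> 0"
  using nzV by (simp add: phi_def vtx_def fgen_eq_fword)

lemma phi_gap_nonzero: "v \<in> Reg E0 E1 s \<Longrightarrow> v \<notin> X \<Longrightarrow> phi (gap v) \<noteq> 0"
  using nzY by (simp add: phi_def gap_eq_gap_elem)

lemma phi_path_comb_zero:
  assumes fin: "finite S" and W: "\<And>\<mu>. \<mu> \<in> S \<Longrightarrow> walk u \<mu> w"
    and ph: "phi (fsum S (\<lambda>\<mu>. fsmul (c \<mu>) (path_el u \<mu>))) = 0"
  shows "\<forall>\<mu>\<in>S. c \<mu> = 0"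
proof (rule ccontr)
  let ?y = "fsum S (\<lambda>\<mu>. fsmul (c \<mu>) (path_el u \<mu>))"
  assume "\<not> (\<forall>\<mu>\<in>S. c \<mu> = 0)"
  hence nz: "\<exists>\<mu>\<in>S. c \<mu> \<noteq> 0" by blast
  obtain \<mu>1 T where \<mu>1: "walk u \<mu>1 w" "c \<mu>1 \<noteq> 0" and T: "finite T" "\<And>\<tau>. \<tau> \<in> T \<Longrightarrow> walk w \<tau> w \<and> \<tau> \<noteq> []"
    and extraction: "\<And>L R Z. L \<in> FA E0 E1 \<Longrightarrow> R \<in> FA E0 E1
       \<Longrightarrow> (\<And>\<tau>. \<tau> \<in> T \<Longrightarrow> fmul L (fmul (path_el w \<tau>) R) \<approx> fzero)
       \<Longrightarrow> fmul L (fmul (vtx w) R) \<approx> (Z :: ('v,'e,'k) el)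
       \<Longrightarrow> fmul L (fmul (fmul (ghost_el u \<mu>1) ?y) R) \<approx> fsmul (c \<mu>1) Z"
    using shortest_path_coeff_extraction[OF fin W nz] by blast
  have "w \<in> E0" using walk_E0[OF \<mu>1(1)] by simp
  then obtain lam z where lam: "walk w lam z" and exits: "\<forall>\<tau>\<in>T. take (length lam) (\<tau> @ lam) \<noteq> lam"
    using exit_walk_exists[OF L _ T] by blast
  have FA: "ghost_el w lam \<in> FA E0 E1" "path_el w lam \<in> FA E0 E1" "ghost_el u \<mu>1 \<in> FA E0 E1" "?y \<in> FA E0 E1"
    using lam \<mu>1 fin W by (auto intro!: FA_ghost_el FA_path_el FA_fsum FA_fsmul)
  have "fmul (ghost_el w lam) (fmul (fmul (ghost_el u \<mu>1) ?y) (path_el w lam)) \<approx> fsmul (c \<mu>1) (vtx z)"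
    using FA lam T(2) exits by (intro extraction ghost_el_exit_path_el ghost_el_vtx_path_el) auto
  moreover have "phi (fmul (ghost_el w lam) (fmul (fmul (ghost_el u \<mu>1) ?y) (path_el w lam))) = 0"
  proof -
    have "phi (fmul (ghost_el u \<mu>1) ?y) = 0" by (rule phi_mul_zero_right[OF FA(3,4) ph])
    hence "phi (fmul (fmul (ghost_el u \<mu>1) ?y) (path_el w lam)) = 0"
      by (rule phi_mul_zero_left[OF FA_fmul[OF FA(3,4)] FA(2)])
    thus ?thesis by (rule phi_mul_zero_right[OF FA(1) FA_fmul[OF FA_fmul[OF FA(3,4)] FA(2)]])
  qed
  ultimately have "phi (fsmul (c \<mu>1) (vtx z)) = 0" by (simp add: phi_eqv)
  moreover have z: "z \<in> E0" using walk_E0[OF lam] by simp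
  ultimately have "phi (vtx z) = 0"
    using phi_smul_zero[OF _ \<mu>1(2) FA_vtx[OF z] z vtx_idem[OF z]] by simp
  thus False using phi_vtx_nonzero[OF z] by simp
qed

lemma phi_path_comb_gap_zero:
  assumes wR: "w \<in> Reg E0 E1 s" and wX: "w \<notin> X"
    and fin: "finite S" and W: "\<And>\<mu>. \<mu> \<in> S \<Longrightarrow> walk u \<mu> w"
    and ph: "phi (fmul (fsum S (\<lambda>\<mu>. fsmul (c \<mu>) (path_el u \<mu>))) (gap w)) = 0"
  shows "\<forall>\<mu>\<in>S. c \<mu> = 0"
proof (rule ccontr)
  let ?y = "fsum S (\<lambda>\<mu>. fsmul (c \<mu>) (path_el u \<mu>))"
  assume "\<not> (\<forall>\<mu>\<in>S. c \<mu> = 0)"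
  hence nz: "\<exists>\<mu>\<in>S. c \<mu> \<noteq> 0" by blast
  obtain \<mu>1 T where \<mu>1: "walk u \<mu>1 w" "c \<mu>1 \<noteq> 0" and T: "finite T" "\<And>\<tau>. \<tau> \<in> T \<Longrightarrow> walk w \<tau> w \<and> \<tau> \<noteq> []"
    and extraction: "\<And>L R Z. L \<in> FA E0 E1 \<Longrightarrow> R \<in> FA E0 E1
       \<Longrightarrow> (\<And>\<tau>. \<tau> \<in> T \<Longrightarrow> fmul L (fmul (path_el w \<tau>) R) \<approx> fzero)
       \<Longrightarrow> fmul L (fmul (vtx w) R) \<approx> (Z :: ('v,'e,'k) el)
       \<Longrightarrow> fmul L (fmul (fmul (ghost_el u \<mu>1) ?y) R) \<approx> fsmul (c \<mu>1) Z"
    using shortest_path_coeff_extraction[OF fin W nz] by blast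
  have FA: "gap w \<in> FA E0 E1" "ghost_el u \<mu>1 \<in> FA E0 E1" "?y \<in> FA E0 E1"
    using wR \<mu>1 fin W by (auto intro!: FA_gap FA_ghost_el FA_fsum FA_fsmul FA_path_el)
  have "fmul (gap w) (fmul (path_el w \<tau>) (gap w)) \<approx> fzero" if "\<tau> \<in> T" for \<tau>
  proof -
    have "fmul (gap w) (fmul (path_el w \<tau>) (gap w)) = fmul (fmul (gap w) (path_el w \<tau>)) (gap w)"
      by (simp add: fmul_assoc)
    also have "\<dots> \<approx> fzero" using T(2)[OF that] FA by (intro eqv_zero_rmul gap_mul_path_el[OF wR]) auto
    finally show ?thesis .
  qed
  moreover have "fmul (gap w) (fmul (vtx w) (gap w)) \<approx> gap w"
    using vtx_mul_gap[OF wR] gap_idem[OF wR] FA by (meson eqv_lmul eqv_trans)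
  ultimately have "fmul (gap w) (fmul (fmul (ghost_el u \<mu>1) ?y) (gap w)) \<approx> fsmul (c \<mu>1) (gap w)"
    using FA by (intro extraction) auto
  moreover have "phi (fmul (gap w) (fmul (fmul (ghost_el u \<mu>1) ?y) (gap w))) = 0"
  proof -
    have "phi (fmul (ghost_el u \<mu>1) (fmul ?y (gap w))) = 0"
      by (rule phi_mul_zero_right[OF FA(2) FA_fmul[OF FA(3,1)] ph])
    hence "phi (fmul (gap w) (fmul (ghost_el u \<mu>1) (fmul ?y (gap w)))) = 0"
      by (rule phi_mul_zero_right[OF FA(1) FA_fmul[OF FA(2) FA_fmul[OF FA(3,1)]]])
    thus ?thesis by (simp add: fmul_assoc)
  qed
  ultimately have "phi (fsmul (c \<mu>1) (gap w)) = 0" by (simp add: phi_eqv)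
  hence "phi (gap w) = 0"
    using phi_smul_zero[OF _ \<mu>1(2) FA(1) _ vtx_mul_gap[OF wR]] regular_out_edges_finite[OF wR] by simp
  thus False using phi_gap_nonzero[OF wR wX] by simp
qed

lemma block_comb_phi_zero_no_ghost:
  assumes B: "block u w m S" and N: "\<forall>t\<in>S. ghost_part t = []" and ph: "phi (comb S c) = 0"
  shows "comb S c = fzero"
proof -
  let ?M = "path_part ` S"
  have "phi (fsum ?M (\<lambda>\<mu>. fsmul (c (u, \<mu>, w, [])) (path_el u \<mu>))) = 0"
    using ph phi_eqv[OF block_comb_no_ghost(1)[OF B N]] by simp
  hence "\<forall>\<mu>\<in>?M. c (u, \<mu>, w, []) = 0"
    using block_comb_no_ghost(2)[OF B N]
    by (intro phi_path_comb_zero[OF finite_imageI[OF block_finite[OF B]]]) auto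
  thus ?thesis by (rule block_comb_no_ghost_zero[OF B N])
qed

lemma block_comb_phi_zero_regular:
  assumes B: "block u w m S" and wR: "w \<in> Reg E0 E1 s" and ph: "phi (comb S c) = 0"
    and XE: "\<And>e. e \<in> out_edges w \<Longrightarrow> fmul (comb S c) (edge e) \<approx> fzero"
  shows "comb S c \<approx> fzero"
proof -
  let ?S0 = "{t\<in>S. ghost_part t = []}"
  have B0: "block u w m ?S0" and N0: "\<forall>t\<in>?S0. ghost_part t = []" using block_subset[OF B] by auto
  have factor: "comb S c \<approx> fmul (comb ?S0 c) (gap w)"
    unfolding gap_def
    by (rule block_comb_eqv_gap_factor[OF B finite_out_edges[OF wR] subset_refl block_ghost_hd_out_edge[OF B] XE])
  show ?thesis
  proof (cases "w \<in> X")
    case True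
    have "fmul (comb ?S0 c) (gap w) \<approx> fmul (comb ?S0 c) fzero"
      by (intro eqv_lmul FA_block_comb[OF B0] gap_eqv_zero True)
    thus ?thesis using factor eqv_trans by (simp add: fmul_fzero_right)
  next
    case False
    let ?M = "path_part ` ?S0"
    have "fmul (comb ?S0 c) (gap w) \<approx> fmul (fsum ?M (\<lambda>\<mu>. fsmul (c (u, \<mu>, w, [])) (path_el u \<mu>))) (gap w)"
      by (intro eqv_rmul FA_gap[OF wR] block_comb_no_ghost(1)[OF B0 N0])
    hence "phi (fmul (fsum ?M (\<lambda>\<mu>. fsmul (c (u, \<mu>, w, [])) (path_el u \<mu>))) (gap w)) = 0"
      using ph factor by (simp add: phi_eqv)
    hence "\<forall>\<mu>\<in>?M. c (u, \<mu>, w, []) = 0"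
      using block_comb_no_ghost(2)[OF B0 N0]
      by (intro phi_path_comb_gap_zero[OF wR False finite_imageI[OF block_finite[OF B0]]]) auto
    hence "comb ?S0 c = fzero" by (rule block_comb_no_ghost_zero[OF B0 N0])
    thus ?thesis using factor by (simp add: fmul_fzero_left)
  qed
qed

lemma block_comb_phi_zero_infinite_emitter:
  assumes B: "block u w m S" and wR: "w \<notin> Reg E0 E1 s" and t1: "t1 \<in> S" "ghost_part t1 \<noteq> []"
    and ph: "phi (comb S c) = 0"
    and XE: "\<And>e. e \<in> out_edges w \<Longrightarrow> fmul (comb S c) (edge e) \<approx> fzero"
  shows "comb S c \<approx> fzero"
proof -
  let ?S0 = "{t\<in>S. ghost_part t = []}"
  let ?M = "path_part ` ?S0"
  let ?y = "fsum ?M (\<lambda>\<mu>. fsmul (c (u, \<mu>, w, [])) (path_el u \<mu>))"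
  define F where "F = (\<lambda>t. hd (ghost_part t)) ` {t\<in>S. ghost_part t \<noteq> []}"
  have B0: "block u w m ?S0" and N0: "\<forall>t\<in>?S0. ghost_part t = []" using block_subset[OF B] by auto
  have W: "\<And>\<mu>. \<mu> \<in> ?M \<Longrightarrow> walk u \<mu> w" and finM: "finite ?M"
    using block_comb_no_ghost(2)[OF B0 N0] block_finite[OF B0] by auto
  have w0: "w \<in> E0" using blockD[OF B t1(1)] walk_E0 by (metis admissible.simps)
  have finF: "finite F" using block_finite[OF B] by (simp add: F_def)
  have FF: "F \<subseteq> out_edges w" using block_ghost_hd_out_edge[OF B] by (auto simp: F_def)
  have "out_edges w \<noteq> {}" using FF t1 unfolding F_def by blast
  hence "infinite (out_edges w)" using wR w0 by (auto simp: Reg_def regular_vertex_def out_edges_def)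
  hence "infinite (out_edges w - F)" by (rule Diff_infinite_finite[OF finF])
  hence "out_edges w - F \<noteq> {}" by (rule infinite_imp_nonempty)
  then obtain f where "f \<in> out_edges w - F" by blast
  hence f: "f \<in> out_edges w" "f \<notin> F" by auto
  have fe: "f \<in> E1" "s f = w" using f(1) by (auto simp: out_edges_def)
  have factor: "comb S c \<approx> fmul (comb ?S0 c) (fminus (vtx w) (fsum F (\<lambda>e. fmul (edge e) (ghost e))))"
    using XE FF by (intro block_comb_eqv_gap_factor[OF B finF FF]) (auto simp: F_def)
  have "fsum ((\<lambda>\<mu>. \<mu> @ [f]) ` ?M) (\<lambda>\<mu>. fsmul (c (u, butlast \<mu>, w, [])) (path_el u \<mu>)) \<approx> fmul ?y (edge f)"
    by (rule eqv_sym[OF path_comb_mul_edge[OF finM W fe]])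
  also have "\<dots> \<approx> fmul (comb ?S0 c) (edge f)"
    by (rule eqv_rmul[OF FA_edge[OF fe(1)] eqv_sym[OF block_comb_no_ghost(1)[OF B0 N0]]])
  also have "\<dots> \<approx> fmul (comb S c) (edge f)"
    using f(2) by (rule_tac eqv_sym, rule_tac block_comb_mul_fresh_edge[OF B fe(1)]) (auto simp: F_def)
  also have "\<dots> \<approx> fzero" by (rule XE[OF f(1)])
  finally have "phi (fsum ((\<lambda>\<mu>. \<mu> @ [f]) ` ?M) (\<lambda>\<mu>. fsmul (c (u, butlast \<mu>, w, [])) (path_el u \<mu>))) = 0"
    by (rule phi_eqv0)
  moreover have "\<And>\<mu>. \<mu> \<in> (\<lambda>\<mu>. \<mu> @ [f]) ` ?M \<Longrightarrow> walk u \<mu> (r f)"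
    using W fe r_in_E0 by (auto simp: walk_append)
  ultimately have "\<forall>\<mu>\<in>(\<lambda>\<mu>. \<mu> @ [f]) ` ?M. c (u, butlast \<mu>, w, []) = 0"
    using finM by (intro phi_path_comb_zero) auto
  hence "comb ?S0 c = fzero" by (intro block_comb_no_ghost_zero[OF B0 N0]) auto
  thus ?thesis using factor by (simp add: fmul_fzero_left)
qed

lemma block_comb_phi_zero:
  "block u w m S \<Longrightarrow> phi (comb S c) = 0 \<Longrightarrow> comb S c \<approx> fzero"
proof (induction m arbitrary: u w S c rule: less_induct)
  case (less m)
  note B = less.prems(1) and ph = less.prems(2)
  show ?case
  proof (cases "\<forall>t\<in>S. ghost_part t = []")
    case True
    thus ?thesis using block_comb_phi_zero_no_ghost[OF B True ph] by simp
  next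
    case False
    then obtain t1 where t1: "t1 \<in> S" "ghost_part t1 \<noteq> []" by blast
    have m1: "m - 1 < m" using blockD[OF B t1(1)] t1(2) by (cases "ghost_part t1") auto
    have XE: "fmul (comb S c) (edge e) \<approx> fzero" if "e \<in> out_edges w" for e
    proof -
      have e: "e \<in> E1" "s e = w" using that by (auto simp: out_edges_def)
      obtain S' c' where S': "block u (r e) (m - 1) S'" "fmul (comb S c) (edge e) \<approx> comb S' c'"
        using block_comb_mul_edge[OF B e] by blast
      have "phi (comb S' c') = 0"
        using phi_mul_zero_left[OF FA_block_comb[OF B] FA_edge[OF e(1)] ph] phi_eqv[OF S'(2)] by simp
      thus ?thesis using less.IH[OF m1 S'(1)] S'(2) eqv_trans by blast
    qed
    show ?thesis
    proof (cases "w \<in> Reg E0 E1 s")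
      case True
      thus ?thesis by (rule block_comb_phi_zero_regular[OF B _ ph XE])
    next
      case False
      thus ?thesis by (rule block_comb_phi_zero_infinite_emitter[OF B _ t1 ph XE])
    qed
  qed
qed

lemma phi_zero_imp_eqv_zero:
  assumes a: "a \<in> FA E0 E1" and pa: "phi a = 0"
  shows "a \<approx> fzero"
proof -
  obtain S c where S: "finite S" "\<forall>t\<in>S. admissible t" and aS: "a \<approx> comb S c"
    using FA_eqv_comb[OF a] by blast
  have FA: "comb S c \<in> FA E0 E1" using S by (intro FA_comb) auto
  let ?P = "(\<lambda>t. (fst t, fst (snd (snd t)))) ` S"
  have "comb S c = fsum ?P (\<lambda>p. comb (corner (fst p) (snd p) S) c)"
    by (rule comb_eq_fsum_corners[OF S(1)])
  also have "\<dots> \<approx> fsum ?P (\<lambda>p. fzero)"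
  proof (rule eqv_fsum)
    show "finite ?P" using S(1) by simp
  next
    fix p assume "p \<in> ?P"
    then obtain u \<mu> w \<nu> where t: "(u, \<mu>, w, \<nu>) \<in> S" and p: "p = (u, w)" by auto
    have "admissible (u, \<mu>, w, \<nu>)" using S(2) t by blast
    then obtain z where "walk u \<mu> z" "walk w \<nu> z" by auto
    hence uw: "u \<in> E0" "w \<in> E0" using walk_E0 by auto
    have "phi (fmul (vtx u) (fmul (comb S c) (vtx w))) = 0"
      using pa phi_eqv[OF aS] FA uw by (simp add: phi_mul FA_fmul FA_vtx)
    hence "phi (comb (corner u w S) c) = 0" using phi_eqv[OF vtx_comb_vtx[OF S uw]] by simp
    hence "comb (corner u w S) c \<approx> fzero" by (rule block_comb_phi_zero[OF corner_block[OF S]])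
    thus "comb (corner (fst p) (snd p) S) c \<approx> fzero" using p by simp
  qed
  finally show ?thesis using aS eqv_trans by (simp add: fsum_fzero)
qed

lemma inj_on_pi: "inj_on \<pi> (CohnAlg E0 E1 r s X)"
proof (rule inj_onI)
  fix x y assume "x \<in> CohnAlg E0 E1 r s X" "y \<in> CohnAlg E0 E1 r s X" and eq: "\<pi> x = \<pi> y"
  then obtain a b where a: "a \<in> FA E0 E1" "x = cls E0 E1 r s X a" and b: "b \<in> FA E0 E1" "y = cls E0 E1 r s X b"
    unfolding CohnAlg_def by blast
  have FAb': "fsmul (-1) b \<in> FA E0 E1" using FA_fsmul[OF b(1)] .
  have "phi (fadd b (fsmul (-1) b)) = phi b + phi (fsmul (-1) b)" by (rule phi_add[OF b(1) FAb'])
  moreover have "fadd b (fsmul (-1) b) = fzero" by (simp add: fdefs)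
  ultimately have nb: "phi (fsmul (-1) b) = - phi b" using phi_zero by (simp add: eq_neg_iff_add_eq_0 add.commute)
  have "phi (fminus a b) = phi a + phi (fsmul (-1) b)" unfolding fminus_eq by (rule phi_add[OF a(1) FAb'])
  also have "\<dots> = 0" using nb eq a b by (simp add: phi_def)
  finally have "fminus a b \<approx> fzero" by (intro phi_zero_imp_eqv_zero FA_fminus a(1) b(1))
  hence "a \<approx> b" by (simp add: eqv_def fminus_fzero)
  thus "x = y" using a b cls_eq by simp
qed

end

theorem mainTheorem5:
  fixes E0 :: "'v set" and E1 :: "'e set" and r s :: "'e \<Rightarrow> 'v"
    and X :: "'v set"
    and \<pi> :: "(('v, 'e) gen list \<Rightarrow> 'k::field) set \<Rightarrow> 'a::ring"
  assumes "graph E0 E1 r s"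
    and "condition_L E1 r s"
    and "X \<subseteq> Reg E0 E1 s"
    and "cohn_ring_hom E0 E1 r s X \<pi>"
    and "\<forall>u \<in> E0. \<pi> (cls E0 E1 r s X (fgen (Vx u))) \<noteq> 0"
    and "\<forall>v \<in> Reg E0 E1 s - X. \<pi> (cls E0 E1 r s X (gap_elem E1 s v)) \<noteq> 0"
  shows "inj_on \<pi> (CohnAlg E0 E1 r s X)"
proof -
  interpret cohn_rep E0 E1 r s X \<pi>
    by (unfold_locales) (use assms in auto)
  show ?thesis by (rule inj_on_pi)
qed

end
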